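(* Let $w\in W$ be minuscule, let $w=s_{i_1}\cdots s_{i_r}$ be a reduced expression of $w$, and set $k:=i_r\in I$. Then $w$ is a strong minuscule element if and only if $k\in K$ and there exists $u\in W$ such that $w=uv_k$ and $\ell(w)=\ell(u)+n$. Moreover, in this case the unique dominant integral weight $\Lambda_w$ for which $w$ is $\Lambda_w$-minuscule is $\Lambda_w=\Lambda_k$.
   Context: Let $\mathfrak g$ be a finite-dimensional simple Lie algebra over $\mathbb C$ of type $\mathrm A_n$, $\mathrm B_n$, $\mathrm C_n$ or $\mathrm D_n$, with index set $I=\{1,\dots,n\}$, simple roots $\alpha_i$, simple coroots $\alpha_i^\vee$, Cartan matrix $a_{ij}=\langle\alpha_j,\alpha_i^\vee\rangle$, fundamental weights $\Lambda_i$, integral weights $P=\bigoplus_{i}\mathbb Z\Lambda_i$, dominant integral weights $P^+=\sum_i\mathbb Z_{\ge0}\Lambda_i$, Weyl group $W$ generated by simple reflections $s_i$, and length function $\ell$. The Dynkin diagrams are labeled as follows: type $\mathrm A_n$: the chain $1-2-\cdots-n$; type $\mathrm B_n$: the chain $1-2-\cdots-n$ with a double bond between $1$ and $2$, where $\alpha_1$ is short and $\alpha_2,\dots,\alpha_n$ are long; type $\mathrm C_n$: the chain $1-2-\cdots-n$ with a double bond between $1$ and $2$, where $\alpha_1$ is long and $\alpha_2,\dots,\alpha_n$ are short; type $\mathrm D_n$: the chain $n-(n-1)-\cdots-3$ with node $3$ additionally joined to both node $1$ and node $2$. Set $K=I$ in types $\mathrm A_n,\mathrm D_n$, $K=\{1\}$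 in type $\mathrm B_n$, and $K=I\setminus\{1\}$ in type $\mathrm C_n$. For $\Lambda\in P$, $w\in W$ is $\Lambda$-minuscule if there is a reduced expression $w=s_{i_1}\cdots s_{i_r}$ with $\langle s_{i_{p+1}}\cdots s_{i_r}(\Lambda),\alpha_{i_p}^\vee\rangle=1$ for all $1\le p\le r$; $w$ is minuscule (resp. dominant minuscule) if it is $\Lambda$-minuscule for some $\Lambda\in P$ (resp. $\Lambda\in P^+$). A dominant minuscule $w$ is strong minuscule if there is a unique $\Lambda\in P^+$ (denoted $\Lambda_w$) such that $w$ is $\Lambda$-minuscule. For $i\in K$ define $v_i\in W$ by: type $\mathrm A_n$: $v_i=s_ns_{n-1}\cdots s_{i+1}s_1s_2\cdots s_{i-1}s_i$; type $\mathrm B_n$: $v_1=s_ns_{n-1}\cdots s_2s_1$; type $\mathrm C_n$ ($2\le i\le n$): $v_i=s_ns_{n-1}\cdots s_{i+1}s_1s_2\cdots s_{i-1}s_i$; type $\mathrm D_n$: $v_1=s_2s_ns_{n-1}\cdots s_3s_1$, $v_2=s_1s_ns_{n-1}\cdots s_3s_2$, and $v_i=s_ns_{n-1}\cdots s_{i+1}s_1s_2s_3\cdots s_{i-1}s_i$ for $3\le i\le n$ (empty products omitted). In all cases $\ell(v_i)=n$. *)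

theory Defs
  imports Main
begin

text \<open>Weights are integer coordinate functions with respect to
  the fundamental weights: lambda j is the coefficient of Lambda_j, so that
  the pairing with alpha_i coroot is lambda i.\<close>

datatype ctype = TA | TB | TC | TD

definition valid_type :: "ctype \<Rightarrow> nat \<Rightarrow> bool" where
  "valid_type t n = (case t of TA \<Rightarrow> n \<ge> 1 | TB \<Rightarrow> n \<ge> 2 | TC \<Rightarrow> n \<ge> 2 | TD \<Rightarrow> n \<ge> 4)"

definition Iset :: "nat \<Rightarrow> nat set" where
  "Iset n = {1..n}"

definition adjacent :: "ctype \<Rightarrow> nat \<Rightarrow> nat \<Rightarrow> bool" where
  "adjacent t i j = (if t = TD then
       (3 \<le> i \<and> j = i + 1) \<or> (3 \<le> j \<and> i = j + 1) \<or>
       {i, j} = {1, 3} \<or> {i, j} = {2, 3}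
     else (i = j + 1 \<or> j = i + 1))"

text \<open>Cartan matrix a_ij = <alpha_j, alpha_i coroot>.\<close>
definition cartan :: "ctype \<Rightarrow> nat \<Rightarrow> nat \<Rightarrow> nat \<Rightarrow> int" where
  "cartan t n i j =
    (if i \<notin> Iset n \<or> j \<notin> Iset n then 0
     else if i = j then 2
     else if \<not> adjacent t i j then 0
     else if t = TB \<and> i = 1 \<and> j = 2 then -2
     else if t = TC \<and> i = 2 \<and> j = 1 then -2
     else -1)"

definition weights :: "nat \<Rightarrow> (nat \<Rightarrow> int) set" where
  "weights n = {lam. \<forall>j. j \<notin> Iset n \<longrightarrow> lam j = 0}"

definition dominant :: "nat \<Rightarrow> (nat \<Rightarrow> int) set" where
  "dominant n = {lam \<in> weights n. \<forall>j \<in> Iset n. lam j \<ge> 0}"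

definition fundw :: "nat \<Rightarrow> nat \<Rightarrow> int" where
  "fundw k = (\<lambda>j. if j = k then 1 else 0)"

text \<open>Simple reflection: s_i(lambda) = lambda - <lambda, alpha_i coroot> alpha_i,
  where alpha_i = sum_j a_ji Lambda_j.\<close>
definition sref :: "ctype \<Rightarrow> nat \<Rightarrow> nat \<Rightarrow> (nat \<Rightarrow> int) \<Rightarrow> (nat \<Rightarrow> int)" where
  "sref t n i lam = (\<lambda>j. lam j - lam i * cartan t n j i)"

definition wact :: "ctype \<Rightarrow> nat \<Rightarrow> nat list \<Rightarrow> (nat \<Rightarrow> int) \<Rightarrow> (nat \<Rightarrow> int)" where
  "wact t n ws = foldr (\<lambda>i f. sref t n i \<circ> f) ws id"

definition words :: "nat \<Rightarrow> nat list set" where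
  "words n = {ws. set ws \<subseteq> Iset n}"

text \<open>The Weyl group, realized faithfully via its action on the weight lattice.\<close>
definition weyl :: "ctype \<Rightarrow> nat \<Rightarrow> ((nat \<Rightarrow> int) \<Rightarrow> (nat \<Rightarrow> int)) set" where
  "weyl t n = {wact t n ws | ws. ws \<in> words n}"

definition wlen :: "ctype \<Rightarrow> nat \<Rightarrow> ((nat \<Rightarrow> int) \<Rightarrow> (nat \<Rightarrow> int)) \<Rightarrow> nat" where
  "wlen t n w = (LEAST r. \<exists>ws \<in> words n. length ws = r \<and> wact t n ws = w)"

definition reduced_expr :: "ctype \<Rightarrow> nat \<Rightarrow> nat list \<Rightarrow> ((nat \<Rightarrow> int) \<Rightarrow> (nat \<Rightarrow> int)) \<Rightarrow> bool" where
  "reduced_expr t n ws w = (ws \<in> words n \<and> wact t n ws = w \<and> length ws = wlen t n w)"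

text \<open>w is Lambda-minuscule: some reduced expression w = s_{i_1}...s_{i_r} with
  <s_{i_{p+1}}...s_{i_r} Lambda, alpha_{i_p} coroot> = 1 for all p (0-indexed q = p-1).\<close>
definition minuscule_for :: "ctype \<Rightarrow> nat \<Rightarrow> (nat \<Rightarrow> int) \<Rightarrow> ((nat \<Rightarrow> int) \<Rightarrow> (nat \<Rightarrow> int)) \<Rightarrow> bool" where
  "minuscule_for t n \<Lambda> w = (\<exists>ws. reduced_expr t n ws w \<and>
      (\<forall>q < length ws. wact t n (drop (Suc q) ws) \<Lambda> (ws ! q) = 1))"

definition minuscule :: "ctype \<Rightarrow> nat \<Rightarrow> ((nat \<Rightarrow> int) \<Rightarrow> (nat \<Rightarrow> int)) \<Rightarrow> bool" where
  "minuscule t n w = (\<exists>\<Lambda> \<in> weights n. minuscule_for t n \<Lambda> w)"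

definition strong_minuscule :: "ctype \<Rightarrow> nat \<Rightarrow> ((nat \<Rightarrow> int) \<Rightarrow> (nat \<Rightarrow> int)) \<Rightarrow> bool" where
  "strong_minuscule t n w = (\<exists>!\<Lambda>. \<Lambda> \<in> dominant n \<and> minuscule_for t n \<Lambda> w)"

definition Lambda_w :: "ctype \<Rightarrow> nat \<Rightarrow> ((nat \<Rightarrow> int) \<Rightarrow> (nat \<Rightarrow> int)) \<Rightarrow> (nat \<Rightarrow> int)" where
  "Lambda_w t n w = (THE \<Lambda>. \<Lambda> \<in> dominant n \<and> minuscule_for t n \<Lambda> w)"

definition Kset :: "ctype \<Rightarrow> nat \<Rightarrow> nat set" where
  "Kset t n = (case t of TA \<Rightarrow> Iset n | TD \<Rightarrow> Iset n | TB \<Rightarrow> {1} | TC \<Rightarrow> Iset n - {1})"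

definition vword :: "ctype \<Rightarrow> nat \<Rightarrow> nat \<Rightarrow> nat list" where
  "vword t n i = (case t of
      TB \<Rightarrow> rev [1..<n+1]
    | TD \<Rightarrow> (if i = 1 then [2] @ rev [3..<n+1] @ [1]
             else if i = 2 then [1] @ rev [3..<n+1] @ [2]
             else rev [i+1..<n+1] @ [1..<i+1])
    | _ \<Rightarrow> rev [i+1..<n+1] @ [1..<i+1])"

end

(*
  For a reduced word s_{i_1} ... s_{i_r}, the p-th value in the minuscule condition is the pairing
  of Lambda with the inversion coroot s_{i_r} ... s_{i_{p+1}}(alpha_{i_p}^vee).  These coroots are
  exactly the positive coroots that w makes negative, so the condition depends only on w.

  For dominant Lambda, a letter whose last occurrence is followed by two occurrences of a
  neighbour would get value at least 2; hence the last occurrences of the letters commute to the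
  end, w = u x with x a permutation of the letters of w ending in k = i_r, and l(w) = l(u) + |x|.
  If Lambda is the only dominant weight that works, every letter occurs (a missing letter would
  leave a coordinate of Lambda free), so x is a permutation of I.  The condition along x then
  forces Lambda = Lambda_k and, for each j /= k with neighbour p(j) on the path to k, puts j
  before p(j) and gives <alpha_{p(j)}, alpha_j^vee> = -1; so x agrees with v_k up to commuting
  letters, and k lies in K.
  Conversely, if w = u v_k with l(w) = l(u) + n, the condition along the tail v_k of a reduced
  word u v_k already determines Lambda = Lambda_k.
*)

theory Submission
  imports Defs
begin

lemma in_Iset_iff: "j \<in> Iset n \<longleftrightarrow> 1 \<le> j \<and> j \<le> n"
  by (simp add: Iset_def)

lemma finite_Iset [simp]: "finite (Iset n)"
  by (simp add: Iset_def)

lemma adjacent_commute: "adjacent t i j = adjacent t j i"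
  unfolding adjacent_def by auto

lemma cartan_diag: "i \<in> Iset n \<Longrightarrow> cartan t n i i = 2"
  by (simp add: cartan_def)

lemma cartan_offdiag_cases:
  assumes "i \<in> Iset n" "j \<in> Iset n" "i \<noteq> j"
  shows "(cartan t n i j = 0 \<and> cartan t n j i = 0 \<and> \<not> adjacent t i j) \<or>
         (adjacent t i j \<and> ((cartan t n i j = -1 \<and> cartan t n j i = -1) \<or>
          (cartan t n i j = -1 \<and> cartan t n j i = -2) \<or>
          (cartan t n i j = -2 \<and> cartan t n j i = -1)))"
  using assms adjacent_commute[of t i j] unfolding cartan_def by auto

lemma cartan_nonpos: "i \<noteq> j \<Longrightarrow> cartan t n i j \<le> 0"
  unfolding cartan_def by auto

lemma cartan_adjacent:
  "i \<in> Iset n \<Longrightarrow> j \<in> Iset n \<Longrightarrow> i \<noteq> j \<Longrightarrow> adjacent t i j \<Longrightarrow>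
   cartan t n i j = (if t = TB \<and> i = 1 \<and> j = 2 then -2 else if t = TC \<and> i = 2 \<and> j = 1 then -2 else -1)"
  unfolding cartan_def by simp

lemma cartan_le_neg1_if_adjacent:
  "i \<in> Iset n \<Longrightarrow> j \<in> Iset n \<Longrightarrow> i \<noteq> j \<Longrightarrow> adjacent t i j \<Longrightarrow> cartan t n i j \<le> -1"
  by (simp add: cartan_adjacent)

lemma cartan_eq_0_if_not_adjacent: "i \<noteq> j \<Longrightarrow> \<not> adjacent t i j \<Longrightarrow> cartan t n i j = 0"
  unfolding cartan_def by auto

lemma cartan_eq_0_commute: "cartan t n i j = 0 \<Longrightarrow> cartan t n j i = 0"
  unfolding cartan_def using adjacent_commute[of t i j] by (auto split: if_splits)

lemma wact_Nil [simp]: "wact t n [] = id"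
  by (simp add: wact_def)

lemma wact_Cons [simp]: "wact t n (i # ws) = sref t n i \<circ> wact t n ws"
  by (simp add: wact_def)

lemma wact_append: "wact t n (xs @ ys) = wact t n xs \<circ> wact t n ys"
  by (induction xs) auto

lemma sref_sref [simp]: "i \<in> Iset n \<Longrightarrow> sref t n i (sref t n i l) = l"
  by (rule ext) (simp add: sref_def cartan_diag algebra_simps)

lemma wact_double_letter: "x \<in> Iset n \<Longrightarrow> wact t n (A @ x # x # B) = wact t n (A @ B)"
  by (rule ext) (simp add: wact_append)

lemma wact_rev_wact: "set xs \<subseteq> Iset n \<Longrightarrow> wact t n (rev xs) (wact t n xs l) = l"
  by (induction xs arbitrary: l) (simp_all add: wact_append)

lemma wact_wact_rev: "set xs \<subseteq> Iset n \<Longrightarrow> wact t n xs (wact t n (rev xs) l) = l"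
  using wact_rev_wact[of "rev xs" n t l] by simp

lemma wact_rev_eq:
  assumes "set xs \<subseteq> Iset n" "set ys \<subseteq> Iset n" "wact t n xs = wact t n ys"
  shows "wact t n (rev xs) = wact t n (rev ys)"
proof
  fix l
  have "wact t n (rev xs) l = wact t n (rev xs) (wact t n xs (wact t n (rev ys) l))"
    using assms(3) wact_wact_rev[OF assms(2)] by simp
  then show "wact t n (rev xs) l = wact t n (rev ys) l"
    using wact_rev_wact[OF assms(1)] by simp
qed

lemma sref_commute:
  "cartan t n i j = 0 \<Longrightarrow> sref t n i \<circ> sref t n j = sref t n j \<circ> sref t n i"
  using cartan_eq_0_commute[of t n i j] by (intro ext) (simp add: sref_def algebra_simps)

lemma sref_wact_commute:
  assumes "\<forall>m\<in>set A. cartan t n i m = 0"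
  shows "sref t n i (wact t n A x) = wact t n A (sref t n i x)"
  using assms
proof (induction A arbitrary: x)
  case (Cons a A)
  then show ?case
    using fun_cong[OF sref_commute[of t n i a]] by simp
qed simp

lemma words_append [simp]: "xs @ ys \<in> words n \<longleftrightarrow> xs \<in> words n \<and> ys \<in> words n"
  by (auto simp: words_def)

lemma words_Cons [simp]: "x # ys \<in> words n \<longleftrightarrow> x \<in> Iset n \<and> ys \<in> words n"
  by (auto simp: words_def)

lemma words_Nil [simp]: "[] \<in> words n"
  by (simp add: words_def)

lemma words_rev [simp]: "rev xs \<in> words n \<longleftrightarrow> xs \<in> words n"
  by (simp add: words_def)

lemma set_subset_Iset_if_words: "xs \<in> words n \<Longrightarrow> set xs \<subseteq> Iset n"
  by (simp add: words_def)

lemma nth_in_Iset_if_words: "xs \<in> words n \<Longrightarrow> p < length xs \<Longrightarrow> xs ! p \<in> Iset n"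
  by (auto simp: words_def)

lemma drop_in_words: "xs \<in> words n \<Longrightarrow> drop p xs \<in> words n"
  by (auto simp: words_def dest: in_set_dropD)

lemma take_in_words: "xs \<in> words n \<Longrightarrow> take p xs \<in> words n"
  by (auto simp: words_def dest: in_set_takeD)

lemma wact_in_weyl: "ws \<in> words n \<Longrightarrow> wact t n ws \<in> weyl t n"
  unfolding weyl_def by auto

lemma wlen_le_length: "ws \<in> words n \<Longrightarrow> wlen t n (wact t n ws) \<le> length ws"
  unfolding wlen_def by (rule Least_le) auto

lemma wlen_attained:
  assumes "w \<in> weyl t n"
  obtains ws where "ws \<in> words n" "wact t n ws = w" "length ws = wlen t n w"
proof -
  obtain ws where "ws \<in> words n" "w = wact t n ws"
    using assms unfolding weyl_def by auto
  then have "\<exists>r. \<exists>ws \<in> words n. length ws = r \<and> wact t n ws = w"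
    by auto
  from LeastI_ex[OF this] show ?thesis
    using that unfolding wlen_def by auto
qed

lemma wlen_append_le_left:
  assumes "xs \<in> words n" "ys \<in> words n"
  shows "wlen t n (wact t n (xs @ ys)) \<le> wlen t n (wact t n xs) + length ys"
proof -
  obtain rs where rs: "rs \<in> words n" "wact t n rs = wact t n xs" "length rs = wlen t n (wact t n xs)"
    using wlen_attained[OF wact_in_weyl[OF assms(1)]] by blast
  then have "wact t n (xs @ ys) = wact t n (rs @ ys)"
    by (simp add: wact_append)
  then show ?thesis
    using wlen_le_length[of "rs @ ys" n t] rs assms by simp
qed

lemma wlen_append_le_right:
  assumes "xs \<in> words n" "ys \<in> words n"
  shows "wlen t n (wact t n (xs @ ys)) \<le> length xs + wlen t n (wact t n ys)"
proof -
  obtain rs where rs: "rs \<in> words n" "wact t n rs = wact t n ys" "length rs = wlen t n (wact t n ys)"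
    using wlen_attained[OF wact_in_weyl[OF assms(2)]] by blast
  then have "wact t n (xs @ ys) = wact t n (xs @ rs)"
    by (simp add: wact_append)
  then show ?thesis
    using wlen_le_length[of "xs @ rs" n t] rs assms by simp
qed

lemma wlen_rev_le:
  assumes "xs \<in> words n"
  shows "wlen t n (wact t n (rev xs)) \<le> wlen t n (wact t n xs)"
proof -
  obtain rs where rs: "rs \<in> words n" "wact t n rs = wact t n xs" "length rs = wlen t n (wact t n xs)"
    using wlen_attained[OF wact_in_weyl[OF assms]] by blast
  then have "wact t n (rev rs) = wact t n (rev xs)"
    using wact_rev_eq assms by (simp add: set_subset_Iset_if_words)
  then show ?thesis
    using wlen_le_length[of "rev rs" n t] rs by simp
qed

lemma wlen_rev: "xs \<in> words n \<Longrightarrow> wlen t n (wact t n (rev xs)) = wlen t n (wact t n xs)"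
  using wlen_rev_le[of xs n t] wlen_rev_le[of "rev xs" n t] by (simp add: antisym)

definition reduced :: "ctype \<Rightarrow> nat \<Rightarrow> nat list \<Rightarrow> bool" where
  "reduced t n ws = (ws \<in> words n \<and> wlen t n (wact t n ws) = length ws)"

lemma reduced_expr_iff: "reduced_expr t n ws w \<longleftrightarrow> reduced t n ws \<and> wact t n ws = w"
  unfolding reduced_expr_def reduced_def by auto

lemma reduced_appendD:
  assumes "reduced t n (xs @ ys)"
  shows "reduced t n xs" "reduced t n ys"
proof -
  have w: "xs \<in> words n" "ys \<in> words n"
    using assms by (auto simp: reduced_def)
  have "wlen t n (wact t n (xs @ ys)) = length xs + length ys"
    using assms by (simp add: reduced_def)
  then show "reduced t n xs" "reduced t n ys"
    using wlen_append_le_left[OF w, of t] wlen_append_le_right[OF w, of t]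
      wlen_le_length[OF w(1), of t] wlen_le_length[OF w(2), of t] w
    unfolding reduced_def by linarith+
qed

lemma reduced_rev: "reduced t n (rev xs) \<longleftrightarrow> reduced t n xs"
  unfolding reduced_def using wlen_rev[of xs n t] by auto

lemma reduced_drop: "reduced t n ws \<Longrightarrow> reduced t n (drop p ws)"
  using reduced_appendD(2)[of t n "take p ws" "drop p ws"] by simp

lemma reduced_take: "reduced t n ws \<Longrightarrow> reduced t n (take p ws)"
  using reduced_appendD(1)[of t n "take p ws" "drop p ws"] by simp

definition minuscule_word :: "ctype \<Rightarrow> nat \<Rightarrow> (nat \<Rightarrow> int) \<Rightarrow> nat list \<Rightarrow> bool" where
  "minuscule_word t n L ws = (\<forall>q < length ws. wact t n (drop (Suc q) ws) L (ws ! q) = 1)"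

lemma minuscule_for_iff:
  "minuscule_for t n L w \<longleftrightarrow> (\<exists>ws. reduced t n ws \<and> wact t n ws = w \<and> minuscule_word t n L ws)"
  unfolding minuscule_for_def minuscule_word_def reduced_expr_iff by auto

lemma minuscule_word_Nil [simp]: "minuscule_word t n L []"
  by (simp add: minuscule_word_def)

lemma minuscule_word_Cons_wact:
  "minuscule_word t n L (x # xs) \<longleftrightarrow> wact t n xs L x = 1 \<and> minuscule_word t n L xs"
  unfolding minuscule_word_def by (auto simp: less_Suc_eq_0_disj)

text \<open>Along a minuscule word every reflection subtracts exactly one simple root.\<close>

lemma wact_if_minuscule_word:
  "minuscule_word t n L xs \<Longrightarrow> wact t n xs L j = L j - sum_list (map (cartan t n j) xs)"
proof (induction xs arbitrary: j)
  case (Cons x xs)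
  then have "minuscule_word t n L xs" "wact t n xs L x = 1"
    by (auto simp: minuscule_word_Cons_wact)
  with Cons.IH show ?case
    by (simp add: sref_def)
qed simp

lemma minuscule_word_Cons:
  "minuscule_word t n L (x # xs) \<longleftrightarrow>
     minuscule_word t n L xs \<and> L x - sum_list (map (cartan t n x) xs) = 1"
  using wact_if_minuscule_word[of t n L xs x] by (auto simp: minuscule_word_Cons_wact)

lemma minuscule_word_appendD: "minuscule_word t n L (xs @ ys) \<Longrightarrow> minuscule_word t n L ys"
  by (induction xs) (auto simp: minuscule_word_Cons)

lemma minuscule_word_determines:
  "minuscule_word t n L xs \<Longrightarrow> minuscule_word t n L' xs \<Longrightarrow> x \<in> set xs \<Longrightarrow> L x = L' x"
  by (induction xs) (auto simp: minuscule_word_Cons)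

lemma minuscule_word_cong:
  "(\<forall>x\<in>set xs. L x = L' x) \<Longrightarrow> minuscule_word t n L xs \<Longrightarrow> minuscule_word t n L' xs"
  by (induction xs) (auto simp: minuscule_word_Cons)

section \<open>The action on the coroot lattice\<close>

text \<open>A vector \<open>h \<in> weights n\<close> is also read as the coroot \<open>\<Sum>j. h j \<alpha>\<^sub>j\<^sup>\<or>\<close>;
  since \<open>\<langle>\<alpha>\<^sub>i, \<alpha>\<^sub>j\<^sup>\<or>\<rangle> = cartan t n j i\<close>, the reflection \<open>s\<^sub>i\<close> only changes the \<open>i\<close>-th coordinate.\<close>

definition cosref :: "ctype \<Rightarrow> nat \<Rightarrow> nat \<Rightarrow> (nat \<Rightarrow> int) \<Rightarrow> (nat \<Rightarrow> int)" where
  "cosref t n i h = h(i := h i - (\<Sum>j\<in>Iset n. h j * cartan t n j i))"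

definition cowact :: "ctype \<Rightarrow> nat \<Rightarrow> nat list \<Rightarrow> (nat \<Rightarrow> int) \<Rightarrow> (nat \<Rightarrow> int)" where
  "cowact t n xs = foldr (\<lambda>i f. cosref t n i \<circ> f) xs id"

definition pairing :: "nat \<Rightarrow> (nat \<Rightarrow> int) \<Rightarrow> (nat \<Rightarrow> int) \<Rightarrow> int" where
  "pairing n l h = (\<Sum>j\<in>Iset n. l j * h j)"

definition positive :: "(nat \<Rightarrow> int) \<Rightarrow> bool" where
  "positive h = ((\<forall>j. 0 \<le> h j) \<and> (\<exists>j. h j \<noteq> 0))"

definition negative :: "(nat \<Rightarrow> int) \<Rightarrow> bool" where
  "negative h = positive (\<lambda>j. - h j)"

lemma cowact_Nil [simp]: "cowact t n [] = id"
  by (simp add: cowact_def)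

lemma cowact_Cons [simp]: "cowact t n (i # xs) = cosref t n i \<circ> cowact t n xs"
  by (simp add: cowact_def)

lemma cowact_append: "cowact t n (xs @ ys) = cowact t n xs \<circ> cowact t n ys"
  by (induction xs) auto

lemma sum_mult_fun_upd:
  fixes f h :: "nat \<Rightarrow> int"
  assumes "i \<in> A" "finite A"
  shows "(\<Sum>j\<in>A. f j * (h(i := v)) j) = (\<Sum>j\<in>A. f j * h j) + f i * (v - h i)"
proof -
  have "(\<Sum>j\<in>A. f j * (h(i := v)) j) = (\<Sum>j\<in>A. f j * h j + (if j = i then f i * (v - h i) else 0))"
    by (rule sum.cong) (auto simp: right_diff_distrib)
  then show ?thesis
    using assms by (simp add: sum.distrib)
qed

lemma sum_fundw_mult:
  assumes "j \<in> Iset n"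
  shows "(\<Sum>x\<in>Iset n. fundw j x * h x) = h j"
proof -
  have "(\<Sum>x\<in>Iset n. fundw j x * h x) = (\<Sum>x\<in>Iset n. if x = j then h j else 0)"
    by (rule sum.cong) (auto simp: fundw_def)
  then show ?thesis
    using assms by simp
qed

lemma pairing_fundw_left: "j \<in> Iset n \<Longrightarrow> pairing n (fundw j) h = h j"
  unfolding pairing_def by (rule sum_fundw_mult)

lemma pairing_fundw_right: "j \<in> Iset n \<Longrightarrow> pairing n l (fundw j) = l j"
  unfolding pairing_def using sum_fundw_mult[of j n l] by (simp add: mult.commute)

lemma pairing_cosref:
  assumes "i \<in> Iset n"
  shows "pairing n l (cosref t n i h) = pairing n (sref t n i l) h"
proof -
  have "pairing n l (cosref t n i h) =
      (\<Sum>j\<in>Iset n. l j * h j) - l i * (\<Sum>j\<in>Iset n. h j * cartan t n j i)"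
    unfolding pairing_def cosref_def sum_mult_fun_upd[OF assms finite_Iset] by (simp add: algebra_simps)
  also have "\<dots> = pairing n (sref t n i l) h"
    unfolding pairing_def sref_def by (simp add: algebra_simps sum_subtractf sum_distrib_left)
  finally show ?thesis .
qed

lemma pairing_cowact:
  "set xs \<subseteq> Iset n \<Longrightarrow> pairing n l (cowact t n xs h) = pairing n (wact t n (rev xs) l) h"
  by (induction xs arbitrary: l) (simp_all add: pairing_cosref wact_append)

lemma fundw_in_weights: "j \<in> Iset n \<Longrightarrow> fundw j \<in> weights n"
  unfolding weights_def fundw_def by auto

lemma fundw_in_dominant: "k \<in> Iset n \<Longrightarrow> fundw k \<in> dominant n"
  unfolding dominant_def weights_def fundw_def by auto

lemma weights_eqI:
  "L \<in> weights n \<Longrightarrow> L' \<in> weights n \<Longrightarrow> (\<And>j. j \<in> Iset n \<Longrightarrow> L j = L' j) \<Longrightarrow> L = L'"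
  unfolding weights_def by (rule ext) (case_tac "x \<in> Iset n"; auto)

lemma cosref_in_weights: "h \<in> weights n \<Longrightarrow> i \<in> Iset n \<Longrightarrow> cosref t n i h \<in> weights n"
  unfolding weights_def cosref_def by auto

lemma cowact_in_weights: "h \<in> weights n \<Longrightarrow> set xs \<subseteq> Iset n \<Longrightarrow> cowact t n xs h \<in> weights n"
  by (induction xs) (auto simp: cosref_in_weights)

text \<open>Since \<open>pairing\<close> is a perfect pairing on vectors supported on \<open>Iset n\<close>, the action on
  coroots factors through the Weyl group.\<close>

lemma cowact_eq_if_wact_eq:
  assumes "xs \<in> words n" "ys \<in> words n" "wact t n xs = wact t n ys" "h \<in> weights n"
  shows "cowact t n xs h = cowact t n ys h"
proof (rule weights_eqI)
  show "cowact t n xs h \<in> weights n" "cowact t n ys h \<in> weights n"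
    using assms by (auto simp: cowact_in_weights set_subset_Iset_if_words)
  have "wact t n (rev xs) = wact t n (rev ys)"
    using wact_rev_eq assms by (simp add: set_subset_Iset_if_words)
  then show "cowact t n xs h j = cowact t n ys h j" if "j \<in> Iset n" for j
    using pairing_cowact[of xs n "fundw j" t h] pairing_cowact[of ys n "fundw j" t h] assms that
    by (simp add: pairing_fundw_left set_subset_Iset_if_words)
qed

lemma cosref_other: "j \<noteq> i \<Longrightarrow> cosref t n i h j = h j"
  by (simp add: cosref_def)

lemma cosref_cosref [simp]:
  assumes "i \<in> Iset n"
  shows "cosref t n i (cosref t n i h) = h"
proof -
  let ?X = "\<Sum>j\<in>Iset n. h j * cartan t n j i"
  have "(\<Sum>j\<in>Iset n. cartan t n j i * (h(i := h i - ?X)) j) = ?X - 2 * ?X"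
    using sum_mult_fun_upd[OF assms finite_Iset, of "\<lambda>j. cartan t n j i" h "h i - ?X"] assms
    by (simp add: cartan_diag mult.commute)
  then show ?thesis
    unfolding cosref_def by (intro ext) (simp add: mult.commute)
qed

lemma cowact_rev_cowact: "set xs \<subseteq> Iset n \<Longrightarrow> cowact t n (rev xs) (cowact t n xs h) = h"
  by (induction xs arbitrary: h) (simp_all add: cowact_append)

lemma cowact_cowact_rev: "set xs \<subseteq> Iset n \<Longrightarrow> cowact t n xs (cowact t n (rev xs) h) = h"
  using cowact_rev_cowact[of "rev xs" n t h] by simp

lemma cosref_lincomb:
  "cosref t n i (\<lambda>j. a * f j + b * g j) = (\<lambda>j. a * cosref t n i f j + b * cosref t n i g j)"
  unfolding cosref_def by (rule ext) (simp add: algebra_simps sum.distrib sum_distrib_left)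

lemma cowact_lincomb:
  "cowact t n xs (\<lambda>j. a * f j + b * g j) = (\<lambda>j. a * cowact t n xs f j + b * cowact t n xs g j)"
  by (induction xs) (auto simp: cosref_lincomb)

lemma cowact_uminus: "cowact t n xs (\<lambda>j. - f j) = (\<lambda>j. - cowact t n xs f j)"
  using cowact_lincomb[of t n xs "-1" f 0 f] by simp

lemma cosref_fundw_self: "i \<in> Iset n \<Longrightarrow> cosref t n i (fundw i) = (\<lambda>j. - fundw i j)"
  using sum_fundw_mult[of i n "\<lambda>j. cartan t n j i"]
  unfolding cosref_def by (intro ext) (auto simp: fundw_def cartan_diag)

lemma positive_fundw: "positive (fundw i)"
  unfolding positive_def fundw_def by auto

lemma not_positive_and_negative: "positive h \<Longrightarrow> negative h \<Longrightarrow> False"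
  unfolding positive_def negative_def by (metis neg_0_le_iff_le order_antisym)

lemma positive_lincomb:
  assumes "positive f" "positive g" "0 \<le> a" "0 \<le> b" "a \<noteq> 0 \<or> b \<noteq> 0"
  shows "positive (\<lambda>j. a * f j + b * g j)"
  unfolding positive_def
proof (intro conjI allI)
  show "0 \<le> a * f j + b * g j" for j
    using assms unfolding positive_def by simp
  obtain i where "f i \<noteq> 0" using assms(1) unfolding positive_def by blast
  obtain i' where "g i' \<noteq> 0" using assms(2) unfolding positive_def by blast
  show "\<exists>j. a * f j + b * g j \<noteq> 0"
  proof (cases "a = 0")
    case True
    then show ?thesis
      using \<open>g i' \<noteq> 0\<close> assms(5) by (intro exI[of _ i']) simp
  next
    case False
    then have "0 < a * f i" "0 \<le> b * g i"
      using assms \<open>f i \<noteq> 0\<close> unfolding positive_def by (simp_all add: order_le_neq_trans)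
    then show ?thesis
      by (intro exI[of _ i]) linarith
  qed
qed

section \<open>Positivity of \<open>w(\<alpha>\<^sub>s\<^sup>\<or>)\<close> when \<open>\<ell>(w s) \<ge> \<ell>(w)\<close>\<close>

definition vec2 :: "nat \<Rightarrow> nat \<Rightarrow> int \<Rightarrow> int \<Rightarrow> nat \<Rightarrow> int" where
  "vec2 s s' a b = (\<lambda>j. a * fundw s j + b * fundw s' j)"

lemma fundw_eq_vec2: "s \<noteq> s' \<Longrightarrow> fundw s = vec2 s s' 1 0"
  unfolding vec2_def by simp

lemma sum_vec2_mult:
  assumes "s \<in> Iset n" "s' \<in> Iset n"
  shows "(\<Sum>j\<in>Iset n. vec2 s s' a b j * f j) = a * f s + b * f s'"
proof -
  have "(\<Sum>j\<in>Iset n. vec2 s s' a b j * f j) =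
      (\<Sum>j\<in>Iset n. fundw s j * (a * f j)) + (\<Sum>j\<in>Iset n. fundw s' j * (b * f j))"
    unfolding vec2_def by (simp add: algebra_simps sum.distrib)
  then show ?thesis
    using sum_fundw_mult[OF assms(1)] sum_fundw_mult[OF assms(2)] by simp
qed

lemma cosref_vec2_left:
  assumes "s \<in> Iset n" "s' \<in> Iset n" "s \<noteq> s'"
  shows "cosref t n s (vec2 s s' a b) = vec2 s s' (- a - b * cartan t n s' s) b"
  unfolding cosref_def using sum_vec2_mult[OF assms(1,2), of a b "\<lambda>j. cartan t n j s"] assms
  by (intro ext) (auto simp: vec2_def fundw_def cartan_diag)

lemma cosref_vec2_right:
  assumes "s \<in> Iset n" "s' \<in> Iset n" "s \<noteq> s'"
  shows "cosref t n s' (vec2 s s' a b) = vec2 s s' a (- b - a * cartan t n s s')"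
  unfolding cosref_def using sum_vec2_mult[OF assms(1,2), of a b "\<lambda>j. cartan t n j s'"] assms
  by (intro ext) (auto simp: vec2_def fundw_def cartan_diag)

lemma wact_braid2: "cartan t n s s' = 0 \<Longrightarrow> wact t n [s, s'] = wact t n [s', s]"
  using sref_commute[of t n s s'] by simp

lemma wact_braid3:
  assumes "s \<in> Iset n" "s' \<in> Iset n" "cartan t n s s' = -1" "cartan t n s' s = -1"
  shows "wact t n [s, s', s] = wact t n [s', s, s']"
  using assms by (intro ext) (simp add: sref_def cartan_diag algebra_simps)

lemma wact_braid4:
  assumes "s \<in> Iset n" "s' \<in> Iset n" "s \<noteq> s'" "cartan t n s s' * cartan t n s' s = 2"
  shows "wact t n [s, s', s, s'] = wact t n [s', s, s', s]"
proof -
  have "(cartan t n s s' = -1 \<and> cartan t n s' s = -2) \<or> (cartan t n s s' = -2 \<and> cartan t n s' s = -1)"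
    using cartan_offdiag_cases[OF assms(1-3), of t] assms(4) by auto
  then show ?thesis
    using assms(1,2) by (elim disjE; intro ext) (simp_all add: sref_def cartan_diag algebra_simps)
qed

lemma alternating_word_cases:
  assumes "set ys \<subseteq> {s, s'}" "\<And>A x B. ys \<noteq> A @ x # x # B" "\<And>A. ys \<noteq> A @ [s]"
  shows "ys = [] \<or> ys = [s'] \<or> ys = [s, s'] \<or> ys = [s', s, s'] \<or> (\<exists>P. ys = P @ [s, s', s, s'])"
proof (cases ys rule: rev_cases)
  case (snoc P1 y1)
  with assms have y1: "y1 = s'" by auto
  show ?thesis
  proof (cases P1 rule: rev_cases)
    case (snoc P2 y2)
    with \<open>ys = P1 @ [y1]\<close> assms(1) assms(2)[of P2 s' "[]"] y1 have y2: "y2 = s" by auto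
    show ?thesis
    proof (cases P2 rule: rev_cases)
      case (snoc P3 y3)
      with \<open>ys = P1 @ [y1]\<close> \<open>P1 = P2 @ [y2]\<close> assms(1) assms(2)[of P3 s "[s']"] y1 y2
      have y3: "y3 = s'" by auto
      show ?thesis
      proof (cases P3 rule: rev_cases)
        case (snoc P4 y4)
        with \<open>ys = P1 @ [y1]\<close> \<open>P1 = P2 @ [y2]\<close> \<open>P2 = P3 @ [y3]\<close> assms(1) assms(2)[of P4 s' "[s, s']"] y1 y2 y3
        show ?thesis by auto
      qed (use \<open>ys = P1 @ [y1]\<close> \<open>P1 = P2 @ [y2]\<close> \<open>P2 = P3 @ [y3]\<close> y1 y2 y3 in auto)
    qed (use \<open>ys = P1 @ [y1]\<close> \<open>P1 = P2 @ [y2]\<close> y1 y2 in auto)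
  qed (use \<open>ys = P1 @ [y1]\<close> y1 in auto)
qed simp

lemma minimal_dihedral_word:
  assumes s: "s \<in> Iset n" "s' \<in> Iset n" and ys: "set ys \<subseteq> {s, s'}"
    and minimal: "\<And>zs. set zs \<subseteq> {s, s'} \<Longrightarrow> wact t n zs = wact t n ys \<Longrightarrow> length ys \<le> length zs"
    and minimal_s: "\<And>zs. set zs \<subseteq> {s, s'} \<Longrightarrow> wact t n zs = wact t n (ys @ [s]) \<Longrightarrow>
      length ys \<le> length zs"
  shows "ys = [] \<or> ys = [s'] \<or> ys = [s, s'] \<or> ys = [s', s, s'] \<or> (\<exists>P. ys = P @ [s, s', s, s'])"
    and "wact t n Q = wact t n (R @ [s]) \<Longrightarrow> length R < length Q \<Longrightarrow> set R \<subseteq> {s, s'} \<Longrightarrow>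
      ys \<noteq> P @ Q"
proof -
  have "ys \<noteq> A @ x # x # B" for A x B
  proof
    assume ys_eq: "ys = A @ x # x # B"
    then have "wact t n (A @ B) = wact t n ys"
      using ys s wact_double_letter[of x n t A B] by auto
    then show False
      using minimal[of "A @ B"] ys ys_eq by auto
  qed
  moreover have "ys \<noteq> A @ [s]" for A
  proof
    assume ys_eq: "ys = A @ [s]"
    then have "wact t n A = wact t n (ys @ [s])"
      using wact_double_letter[OF s(1), of t A "[]"] by simp
    then show False
      using minimal_s[of A] ys ys_eq by auto
  qed
  ultimately show "ys = [] \<or> ys = [s'] \<or> ys = [s, s'] \<or> ys = [s', s, s'] \<or> (\<exists>P. ys = P @ [s, s', s, s'])"
    using alternating_word_cases[OF ys] by blast
  assume R: "wact t n Q = wact t n (R @ [s])" "length R < length Q" "set R \<subseteq> {s, s'}"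
  show "ys \<noteq> P @ Q"
  proof
    assume ys_eq: "ys = P @ Q"
    have "wact t n (Q @ [s]) = wact t n (R @ [s, s])"
      using R(1) by (simp add: wact_append comp_assoc)
    also have "\<dots> = wact t n R"
      using wact_double_letter[OF s(1), of t R "[]"] by simp
    finally have "wact t n (P @ R) = wact t n (ys @ [s])"
      using ys_eq by (simp add: wact_append)
    then show False
      using minimal_s[of "P @ R"] ys ys_eq R(2,3) by auto
  qed
qed

text \<open>The rank-two case: a minimal word as above is an alternating word shorter than the braid
  relation, and one checks directly that it sends \<open>\<alpha>\<^sub>s\<^sup>\<or>\<close> to a nonnegative combination of
  \<open>\<alpha>\<^sub>s\<^sup>\<or>\<close> and \<open>\<alpha>\<^sub>s\<^sub>'\<^sup>\<or>\<close>.\<close>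

lemma cowact_dihedral_fundw:
  assumes s: "s \<in> Iset n" "s' \<in> Iset n" "s \<noteq> s'" and ys: "set ys \<subseteq> {s, s'}"
    and minimal: "\<And>zs. set zs \<subseteq> {s, s'} \<Longrightarrow> wact t n zs = wact t n ys \<Longrightarrow> length ys \<le> length zs"
    and minimal_s: "\<And>zs. set zs \<subseteq> {s, s'} \<Longrightarrow> wact t n zs = wact t n (ys @ [s]) \<Longrightarrow>
      length ys \<le> length zs"
  shows "\<exists>a b. 0 \<le> a \<and> 0 \<le> b \<and> (a \<noteq> 0 \<or> b \<noteq> 0) \<and> cowact t n ys (fundw s) = vec2 s s' a b"
proof -
  note shape = minimal_dihedral_word(1)[OF s(1,2) ys minimal minimal_s]
  note no_braid_suffix = minimal_dihedral_word(2)[OF s(1,2) ys minimal minimal_s]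
  note vec2_simps = fundw_eq_vec2[OF s(3)] cosref_vec2_left[OF s] cosref_vec2_right[OF s]
  \<comment> \<open>the equation comes last so that, with \<open>rule witness; simp\<close>, it is solved first and fixes \<open>a\<close>, \<open>b\<close>\<close>
  have witness: "\<exists>a b. 0 \<le> a \<and> 0 \<le> b \<and> (a \<noteq> 0 \<or> b \<noteq> 0) \<and> cowact t n ys (fundw s) = vec2 s s' a b"
    if "0 \<le> a" "0 \<le> b" "a \<noteq> 0 \<or> b \<noteq> 0" "cowact t n ys (fundw s) = vec2 s s' a b" for a b
    using that by blast
  consider "cartan t n s s' = 0" "cartan t n s' s = 0"
    | "cartan t n s s' = -1" "cartan t n s' s = -1"
    | "cartan t n s s' * cartan t n s' s = 2"
    using cartan_offdiag_cases[OF s, of t] by force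
  then show ?thesis
  proof cases
    case 1
    then have no_suffix: "ys \<noteq> P @ [s, s']" for P
      using no_braid_suffix[where Q = "[s, s']" and R = "[s']"] wact_braid2[of t n s s'] by simp
    have "ys \<noteq> [s, s']" "ys \<noteq> [s', s, s']" "ys \<noteq> P @ [s, s', s, s']" for P
      using no_suffix[of "[]"] no_suffix[of "[s']"] no_suffix[of "P @ [s, s']"] by simp_all
    then have "ys = [] \<or> ys = [s']"
      using shape by blast
    then show ?thesis
      using 1 by - (elim disjE; rule witness; simp add: vec2_simps)
  next
    case 2
    then have no_suffix: "ys \<noteq> P @ [s', s, s']" for P
      using no_braid_suffix[where Q = "[s', s, s']" and R = "[s, s']"] wact_braid3[OF s(2,1), of t]
      by simp
    have "ys \<noteq> [s', s, s']" "ys \<noteq> P @ [s, s', s, s']" for P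
      using no_suffix[of "[]"] no_suffix[of "P @ [s]"] by simp_all
    then have "ys = [] \<or> ys = [s'] \<or> ys = [s, s']"
      using shape by blast
    then show ?thesis
      using 2 by - (elim disjE; rule witness; simp add: vec2_simps)
  next
    case 3
    then have "ys \<noteq> P @ [s, s', s, s']" for P
      using no_braid_suffix[where Q = "[s, s', s, s']" and R = "[s', s, s']"] wact_braid4[OF s, of t]
      by simp
    then have "ys = [] \<or> ys = [s'] \<or> ys = [s, s'] \<or> ys = [s', s, s']"
      using shape by blast
    moreover have "(cartan t n s s' = -1 \<and> cartan t n s' s = -2) \<or>
        (cartan t n s s' = -2 \<and> cartan t n s' s = -1)"
      using cartan_offdiag_cases[OF s, of t] 3 by auto
    ultimately show ?thesis
      by - (elim disjE; rule witness; simp add: vec2_simps)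
  qed
qed

lemma parabolic_factorization:
  assumes rs: "rs \<in> words n" and J: "J \<subseteq> Iset n" "set ys0 \<subseteq> J"
    and additive: "wlen t n (wact t n (rs @ ys0)) = wlen t n (wact t n rs) + length ys0"
  obtains vs ys where "vs \<in> words n" "set ys \<subseteq> J" "wact t n (vs @ ys) = wact t n (rs @ ys0)"
    "wlen t n (wact t n vs) + length ys = wlen t n (wact t n (rs @ ys0))"
    "wlen t n (wact t n vs) \<le> wlen t n (wact t n rs)"
    "\<And>x. x \<in> J \<Longrightarrow> wlen t n (wact t n vs) \<le> wlen t n (wact t n (vs @ [x]))"
proof -
  let ?w = "wact t n (rs @ ys0)" and ?l = "\<lambda>vs. wlen t n (wact t n vs)"
  define factor where "factor p \<longleftrightarrow> fst p \<in> words n \<and> set (snd p) \<subseteq> J \<and>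
      wact t n (fst p @ snd p) = ?w \<and> ?l (fst p) + length (snd p) = ?l (rs @ ys0)" for p
  have "factor (rs, ys0)"
    unfolding factor_def using rs J additive by simp
  then obtain p where p: "factor p" and least_p: "\<And>q. factor q \<Longrightarrow> ?l (fst p) \<le> ?l (fst q)"
    using ex_has_least_nat[of factor "(rs, ys0)" "\<lambda>p. ?l (fst p)"] by blast
  obtain vs ys where "p = (vs, ys)"
    by fastforce
  with p least_p have vs_ys: "factor (vs, ys)" and least: "\<And>q. factor q \<Longrightarrow> ?l vs \<le> ?l (fst q)"
    by auto
  have ascent: "?l vs \<le> ?l (vs @ [x])" if x: "x \<in> J" for x
  proof (rule ccontr)
    assume "\<not> ?thesis"
    then have descent: "?l (vs @ [x]) < ?l vs" by simp
    have xI: "x \<in> Iset n" using x J by auto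
    have ys: "ys \<in> words n" using vs_ys J unfolding factor_def words_def by auto
    have w: "wact t n ((vs @ [x]) @ x # ys) = ?w"
      using vs_ys wact_double_letter[OF xI, of t vs ys] unfolding factor_def by simp
    then have "?l (rs @ ys0) \<le> ?l (vs @ [x]) + length (x # ys)"
      using wlen_append_le_left[of "vs @ [x]" n "x # ys" t] vs_ys ys xI unfolding factor_def by simp
    then have "factor (vs @ [x], x # ys)"
      unfolding factor_def using vs_ys xI x w descent unfolding factor_def by auto
    from least[OF this] descent show False by simp
  qed
  have "?l vs \<le> ?l rs"
    using least[OF \<open>factor (rs, ys0)\<close>] by simp
  with vs_ys ascent show ?thesis
    using that unfolding factor_def by auto
qed

lemma dihedral_factorization:
  assumes ws: "ws \<in> words n" and s: "s \<in> Iset n"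
    and ascent: "wlen t n (wact t n ws) \<le> wlen t n (wact t n (ws @ [s]))"
    and nontrivial: "wlen t n (wact t n ws) \<noteq> 0"
  obtains s' vs ys where "s' \<in> Iset n" "s \<noteq> s'" "vs \<in> words n" "set ys \<subseteq> {s, s'}"
    "wact t n (vs @ ys) = wact t n ws"
    "wlen t n (wact t n vs) + length ys = wlen t n (wact t n ws)"
    "wlen t n (wact t n vs) < wlen t n (wact t n ws)"
    "\<And>x. x \<in> {s, s'} \<Longrightarrow> wlen t n (wact t n vs) \<le> wlen t n (wact t n (vs @ [x]))"
proof -
  let ?l = "\<lambda>vs. wlen t n (wact t n vs)"
  obtain rs where rs: "reduced t n rs" "wact t n rs = wact t n ws"
    using wlen_attained[OF wact_in_weyl[OF ws], of t] unfolding reduced_def by metis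
  with nontrivial obtain rs' s' where snoc: "rs = rs' @ [s']"
    by (cases rs rule: rev_cases) (auto simp: reduced_def)
  have rs': "reduced t n rs'" "rs' \<in> words n" "s' \<in> Iset n"
    using reduced_appendD[of t n rs' "[s']"] rs snoc by (auto simp: reduced_def)
  have l_ws: "?l ws = ?l rs' + 1"
    using rs rs' snoc by (simp add: reduced_def)
  have "s \<noteq> s'"
  proof
    assume "s = s'"
    have "wact t n (ws @ [s]) = wact t n (rs @ [s])"
      by (simp add: wact_append rs(2))
    also have "\<dots> = wact t n rs'"
      using snoc \<open>s = s'\<close> wact_double_letter[OF rs'(3), of t rs' "[]"] by simp
    finally show False
      using ascent l_ws by simp
  qed
  have additive: "?l (rs' @ [s']) = ?l rs' + length [s']"
    using rs snoc rs' l_ws by simp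
  have J: "{s, s'} \<subseteq> Iset n" "set [s'] \<subseteq> {s, s'}"
    using s rs'(3) by auto
  obtain vs ys where "vs \<in> words n" "set ys \<subseteq> {s, s'}"
    "wact t n (vs @ ys) = wact t n (rs' @ [s'])" "?l vs + length ys = ?l (rs' @ [s'])" "?l vs \<le> ?l rs'"
    "\<And>x. x \<in> {s, s'} \<Longrightarrow> ?l vs \<le> ?l (vs @ [x])"
    by (rule parabolic_factorization[OF rs'(2) J additive]) blast
  with that[OF rs'(3) \<open>s \<noteq> s'\<close>] rs snoc l_ws show ?thesis
    by simp
qed

lemma cowact_fundw_positive_if_dihedral_factorization:
  assumes ws: "ws \<in> words n" "wlen t n (wact t n ws) \<le> wlen t n (wact t n (ws @ [s]))"
    and s: "s \<in> Iset n" "s' \<in> Iset n" "s \<noteq> s'" and vs: "vs \<in> words n" and ys: "set ys \<subseteq> {s, s'}"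
    and vs_ys: "wact t n (vs @ ys) = wact t n ws"
      "wlen t n (wact t n vs) + length ys = wlen t n (wact t n ws)"
    and positive: "positive (cowact t n vs (fundw s))" "positive (cowact t n vs (fundw s'))"
  shows "positive (cowact t n ws (fundw s))"
proof -
  have words: "zs \<in> words n" if "set zs \<subseteq> {s, s'}" for zs
    using that s by (auto simp: words_def)
  have "length ys \<le> length zs" if zs: "set zs \<subseteq> {s, s'}" "wact t n zs = wact t n ys" for zs
    using wlen_append_le_left[OF vs words[OF zs(1)], of t] vs_ys zs(2) by (simp add: wact_append)
  moreover have "length ys \<le> length zs"
    if zs: "set zs \<subseteq> {s, s'}" "wact t n zs = wact t n (ys @ [s])" for zs
  proof -
    have "wact t n (vs @ zs) = wact t n (ws @ [s])"
      using vs_ys(1) zs(2) by (metis append_assoc wact_append)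
    then show ?thesis
      using wlen_append_le_left[OF vs words[OF zs(1)], of t] vs_ys(2) ws(2) by simp
  qed
  ultimately obtain a b where ab: "0 \<le> a" "0 \<le> b" "a \<noteq> 0 \<or> b \<noteq> 0"
      "cowact t n ys (fundw s) = vec2 s s' a b"
    using cowact_dihedral_fundw[OF s ys] by blast
  have "cowact t n ws (fundw s) = cowact t n (vs @ ys) (fundw s)"
    using cowact_eq_if_wact_eq[OF ws(1) _ _ fundw_in_weights[OF s(1)]] vs words[OF ys] vs_ys(1)
    by simp
  also have "\<dots> = (\<lambda>j. a * cowact t n vs (fundw s) j + b * cowact t n vs (fundw s') j)"
    using ab(4) by (simp add: cowact_append vec2_def cowact_lincomb)
  finally show ?thesis
    using positive_lincomb[OF positive ab(1-3)] by simp
qed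

text \<open>The proof avoids the exchange condition: induct on \<open>\<ell>(w)\<close> and split \<open>w = v y\<close> with \<open>y\<close>
  in the subgroup generated by \<open>s\<close> and the last letter of a reduced word for \<open>w\<close>.\<close>

lemma cowact_fundw_positive:
  assumes "ws \<in> words n" "s \<in> Iset n" "wlen t n (wact t n ws) \<le> wlen t n (wact t n (ws @ [s]))"
  shows "positive (cowact t n ws (fundw s))"
  using assms
proof (induction "wlen t n (wact t n ws)" arbitrary: ws s rule: less_induct)
  case less
  show ?case
  proof (cases "wlen t n (wact t n ws) = 0")
    case True
    obtain rs where "wact t n rs = wact t n ws" "length rs = wlen t n (wact t n ws)"
      using wlen_attained[OF wact_in_weyl[OF less.prems(1)], of t] by metis
    with True have "wact t n ws = wact t n []"
      by simp
    then have "cowact t n ws (fundw s) = fundw s"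
      using cowact_eq_if_wact_eq[OF less.prems(1) words_Nil _ fundw_in_weights[OF less.prems(2)]]
      by simp
    then show ?thesis by (simp add: positive_fundw)
  next
    case False
    from dihedral_factorization[OF less.prems False] obtain s' vs ys where
      s': "s' \<in> Iset n" "s \<noteq> s'" and vs: "vs \<in> words n" "set ys \<subseteq> {s, s'}"
        "wact t n (vs @ ys) = wact t n ws" "wlen t n (wact t n vs) + length ys = wlen t n (wact t n ws)"
        "wlen t n (wact t n vs) < wlen t n (wact t n ws)"
      and ascent: "\<And>x. x \<in> {s, s'} \<Longrightarrow> wlen t n (wact t n vs) \<le> wlen t n (wact t n (vs @ [x]))"
      by blast
    have "positive (cowact t n vs (fundw x))" if "x \<in> {s, s'}" for x
      using less.hyps[OF vs(5) vs(1)] ascent[OF that] that less.prems(2) s'(1) by blast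
    then show ?thesis
      using cowact_fundw_positive_if_dihedral_factorization[OF less.prems(1,3,2) s' vs(1-4)] by simp
  qed
qed

lemma cowact_fundw_negative:
  assumes "ws \<in> words n" "s \<in> Iset n" "wlen t n (wact t n (ws @ [s])) < wlen t n (wact t n ws)"
  shows "negative (cowact t n ws (fundw s))"
proof -
  have "wact t n ((ws @ [s]) @ [s]) = wact t n ws"
    using wact_double_letter[OF assms(2), of t ws "[]"] by simp
  then have "positive (cowact t n (ws @ [s]) (fundw s))"
    using cowact_fundw_positive[of "ws @ [s]" n s t] assms by simp
  then show ?thesis
    using assms(2) by (simp add: negative_def cowact_append cosref_fundw_self cowact_uminus)
qed

lemma cowact_fundw_positive_or_negative:
  "ws \<in> words n \<Longrightarrow> s \<in> Iset n \<Longrightarrow>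
    positive (cowact t n ws (fundw s)) \<or> negative (cowact t n ws (fundw s))"
  using cowact_fundw_positive cowact_fundw_negative by (metis not_le)

section \<open>Inversion coroots and independence of the reduced word\<close>

definition coroot :: "ctype \<Rightarrow> nat \<Rightarrow> (nat \<Rightarrow> int) \<Rightarrow> bool" where
  "coroot t n g = (\<exists>xs j. xs \<in> words n \<and> j \<in> Iset n \<and> g = cowact t n xs (fundw j))"

lemma coroot_positive_or_negative: "coroot t n g \<Longrightarrow> positive g \<or> negative g"
  unfolding coroot_def using cowact_fundw_positive_or_negative by blast

lemma coroot_cowact: "coroot t n g \<Longrightarrow> xs \<in> words n \<Longrightarrow> coroot t n (cowact t n xs g)"
  unfolding coroot_def by (metis cowact_append comp_apply words_append)

lemma coroot_in_weights: "coroot t n g \<Longrightarrow> g \<in> weights n"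
  unfolding coroot_def by (metis cowact_in_weights fundw_in_weights set_subset_Iset_if_words)

text \<open>Only the simple coroot \<open>\<alpha>\<^sub>i\<^sup>\<or>\<close> changes sign under \<open>s\<^sub>i\<close>: all other coordinates are fixed,
  so such a coroot is a positive multiple of \<open>\<alpha>\<^sub>i\<^sup>\<or>\<close>, and the multiple is \<open>1\<close> because the
  coroot is a Weyl translate of a simple coroot.\<close>

lemma coroot_eq_fundw_if_sign_change:
  assumes g: "coroot t n g" "positive g" "negative (cosref t n i g)" and i: "i \<in> Iset n"
  shows "g = fundw i"
proof -
  have zero: "g j = 0" if "j \<noteq> i" for j
    using g(2,3) cosref_other[OF that, of t n g] unfolding negative_def positive_def
    by (metis neg_0_le_iff_le order_antisym)
  define c where "c = g i"
  have g_eq: "g = (\<lambda>j. c * fundw i j + 0 * fundw i j)"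
    using zero unfolding c_def fundw_def by (intro ext) auto
  have "0 < c"
    using g(2) zero unfolding positive_def c_def by (metis order_le_neq_trans)
  obtain xs j where xs: "xs \<in> words n" "j \<in> Iset n" "g = cowact t n xs (fundw j)"
    using g(1) unfolding coroot_def by blast
  have "fundw j = cowact t n (rev xs) g"
    using cowact_rev_cowact[of xs n t] xs by (simp add: set_subset_Iset_if_words)
  also have "\<dots> = (\<lambda>k. c * cowact t n (rev xs) (fundw i) k + 0 * cowact t n (rev xs) (fundw i) k)"
    by (subst g_eq) (rule cowact_lincomb)
  finally have "1 = c * cowact t n (rev xs) (fundw i) j"
    by (metis add.right_neutral fundw_def mult_zero_left)
  with \<open>0 < c\<close> have "c = 1"
    by (metis pos_zmult_eq_1_iff)
  with g_eq show ?thesis by simp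
qed

definition inversion_coroot :: "ctype \<Rightarrow> nat \<Rightarrow> nat list \<Rightarrow> nat \<Rightarrow> nat \<Rightarrow> int" where
  "inversion_coroot t n ws p = cowact t n (rev (drop (Suc p) ws)) (fundw (ws ! p))"

lemma coroot_inversion_coroot:
  "ws \<in> words n \<Longrightarrow> p < length ws \<Longrightarrow> coroot t n (inversion_coroot t n ws p)"
  unfolding inversion_coroot_def coroot_def
  by (blast intro: nth_in_Iset_if_words drop_in_words[THEN words_rev[THEN iffD2]])

lemma nat_transition: "P m \<Longrightarrow> \<not> P 0 \<Longrightarrow> \<exists>p<m. P (Suc p) \<and> \<not> P p"
proof (induction m)
  case (Suc m)
  then show ?case by (cases "P m") (auto intro: less_SucI)
qed simp

lemma inversion_coroot_if_negated:
  assumes ws: "ws \<in> words n" and g: "coroot t n g" "positive g" "negative (cowact t n ws g)"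
  shows "\<exists>p<length ws. g = inversion_coroot t n ws p"
proof -
  define g' where "g' q = cowact t n (drop q ws) g" for q
  have "positive (g' (length ws))" "\<not> positive (g' 0)"
    using g not_positive_and_negative by (auto simp: g'_def)
  then obtain p where p: "p < length ws" "positive (g' (Suc p))" "\<not> positive (g' p)"
    using nat_transition[of "\<lambda>q. positive (g' q)"] by blast
  have s: "ws ! p \<in> Iset n" and drop: "drop (Suc p) ws \<in> words n"
    using ws p(1) by (auto simp: nth_in_Iset_if_words drop_in_words)
  have g'_coroot: "coroot t n (g' q)" for q
    unfolding g'_def using coroot_cowact[OF g(1) drop_in_words[OF ws]] .
  have "g' p = cosref t n (ws ! p) (g' (Suc p))"
    unfolding g'_def using p(1) by (simp add: Cons_nth_drop_Suc[symmetric])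
  moreover have "negative (g' p)"
    using coroot_positive_or_negative[OF g'_coroot] p(3) by blast
  ultimately have "g' (Suc p) = fundw (ws ! p)"
    using coroot_eq_fundw_if_sign_change[OF g'_coroot p(2) _ s] by simp
  then have "g = inversion_coroot t n ws p"
    using cowact_rev_cowact[of "drop (Suc p) ws" n t g] drop
    by (simp add: g'_def inversion_coroot_def set_subset_Iset_if_words)
  with p(1) show ?thesis by blast
qed

lemma inversion_coroot_positive:
  assumes "reduced t n ws" "p < length ws"
  shows "positive (inversion_coroot t n ws p)"
proof -
  let ?tail = "drop (Suc p) ws"
  have ws: "ws \<in> words n" using assms(1) by (simp add: reduced_def)
  have "drop p ws = ws ! p # ?tail"
    using assms(2) by (simp add: Cons_nth_drop_Suc)
  then have "wlen t n (wact t n (rev ?tail @ [ws ! p])) = length ?tail + 1"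
    using reduced_drop[OF assms(1), of p] reduced_rev[of t n "drop p ws"] by (simp add: reduced_def)
  moreover have "wlen t n (wact t n (rev ?tail)) \<le> length ?tail"
    using wlen_le_length[of "rev ?tail" n t] drop_in_words[OF ws] by simp
  ultimately show ?thesis
    unfolding inversion_coroot_def
    using cowact_fundw_positive[of "rev ?tail" n "ws ! p" t] drop_in_words[OF ws]
      nth_in_Iset_if_words[OF ws assms(2)]
    by simp
qed

lemma cowact_inversion_coroot_negative:
  assumes "reduced t n ws" "p < length ws"
  shows "negative (cowact t n ws (inversion_coroot t n ws p))"
proof -
  let ?s = "ws ! p"
  have ws: "ws \<in> words n" using assms(1) by (simp add: reduced_def)
  have s: "?s \<in> Iset n" using nth_in_Iset_if_words[OF ws assms(2)] .
  have take: "take (Suc p) ws = take p ws @ [?s]"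
    using assms(2) by (simp add: take_Suc_conv_app_nth)
  have "wlen t n (wact t n (take p ws)) \<le> p"
    using wlen_le_length[OF take_in_words[OF ws, of p], of t] assms(2) by simp
  moreover have "wlen t n (wact t n (take p ws @ [?s])) = p + 1"
    using reduced_take[OF assms(1), of "Suc p"] take assms(2) by (simp add: reduced_def)
  ultimately have pos: "positive (cowact t n (take p ws) (fundw ?s))"
    using cowact_fundw_positive[OF take_in_words[OF ws] s, of t] by simp
  have "cowact t n ws (inversion_coroot t n ws p) =
      cowact t n (take (Suc p) ws) (cowact t n (drop (Suc p) ws)
        (cowact t n (rev (drop (Suc p) ws)) (fundw ?s)))"
    unfolding inversion_coroot_def by (metis append_take_drop_id cowact_append comp_apply)
  also have "\<dots> = cowact t n (take (Suc p) ws) (fundw ?s)"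
    using cowact_cowact_rev drop_in_words[OF ws] by (simp add: set_subset_Iset_if_words)
  also have "\<dots> = (\<lambda>j. - cowact t n (take p ws) (fundw ?s) j)"
    using take s by (simp add: cowact_append cosref_fundw_self cowact_uminus)
  finally show ?thesis
    using pos unfolding negative_def by simp
qed

lemma wact_drop_nth_eq_pairing:
  assumes "ws \<in> words n" "q < length ws"
  shows "wact t n (drop (Suc q) ws) L (ws ! q) = pairing n L (inversion_coroot t n ws q)"
  unfolding inversion_coroot_def
  using pairing_cowact[of "rev (drop (Suc q) ws)" n L t] pairing_fundw_right[OF nth_in_Iset_if_words[OF assms]]
    drop_in_words[OF assms(1)]
  by (simp add: set_subset_Iset_if_words)

lemma minuscule_word_reduced_indep:
  assumes "reduced t n ws1" "reduced t n ws2" "wact t n ws1 = wact t n ws2"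
    and "minuscule_word t n L ws1"
  shows "minuscule_word t n L ws2"
  unfolding minuscule_word_def
proof (intro allI impI)
  fix q assume q: "q < length ws2"
  have ws: "ws1 \<in> words n" "ws2 \<in> words n"
    using assms(1,2) by (auto simp: reduced_def)
  let ?g = "inversion_coroot t n ws2 q"
  have g: "coroot t n ?g"
    using coroot_inversion_coroot[OF ws(2) q] .
  have "cowact t n ws2 ?g = cowact t n ws1 ?g"
    using cowact_eq_if_wact_eq[OF ws(2,1) assms(3)[symmetric] coroot_in_weights[OF g]] .
  then obtain p where p: "p < length ws1" "?g = inversion_coroot t n ws1 p"
    using inversion_coroot_if_negated[OF ws(1) g] inversion_coroot_positive[OF assms(2) q]
      cowact_inversion_coroot_negative[OF assms(2) q] by auto
  have "wact t n (drop (Suc q) ws2) L (ws2 ! q) = pairing n L ?g"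
    using wact_drop_nth_eq_pairing[OF ws(2) q] .
  also have "\<dots> = wact t n (drop (Suc p) ws1) L (ws1 ! p)"
    using wact_drop_nth_eq_pairing[OF ws(1) p(1)] p(2) by simp
  also have "\<dots> = 1"
    using assms(4) p(1) unfolding minuscule_word_def by blast
  finally show "wact t n (drop (Suc q) ws2) L (ws2 ! q) = 1" .
qed

section \<open>Dominant minuscule words\<close>

text \<open>\<open>remdups\<close> keeps the last occurrence of each letter; \<open>remdups_dropped\<close> collects the
  earlier occurrences it deletes.\<close>

fun remdups_dropped :: "'a list \<Rightarrow> 'a list" where
  "remdups_dropped [] = []"
| "remdups_dropped (x # xs) = (if x \<in> set xs then x # remdups_dropped xs else remdups_dropped xs)"

lemma length_remdups_dropped: "length (remdups_dropped xs) + length (remdups xs) = length xs"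
  by (induction xs) auto

lemma set_remdups_dropped: "set (remdups_dropped xs) \<subseteq> set xs"
  by (induction xs) auto

lemma count_list_ge_2_if_dropped: "m \<in> set (remdups_dropped xs) \<Longrightarrow> 2 \<le> count_list xs m"
proof (induction xs)
  case (Cons x xs)
  show ?case
  proof (cases "m = x")
    case True
    with Cons.prems set_remdups_dropped[of xs] have "x \<in> set xs"
      by (auto split: if_splits)
    then have "count_list xs x \<noteq> 0"
      by (simp add: count_list_0_iff)
    with True show ?thesis by simp
  next
    case False
    with Cons show ?thesis by (auto split: if_splits)
  qed
qed simp

lemma last_remdups: "xs \<noteq> [] \<Longrightarrow> last (remdups xs) = last xs"
  by (induction xs) (auto simp: remdups_eq_nil_iff)

lemma sum_list_le_count_list_mult:
  fixes f :: "'a \<Rightarrow> int"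
  assumes "\<forall>x\<in>set xs. f x \<le> 0"
  shows "sum_list (map f xs) \<le> int (count_list xs m) * f m"
  using assms by (induction xs) (auto simp: algebra_simps)

lemma sum_list_le_sum_set:
  fixes f :: "'a \<Rightarrow> int"
  assumes "\<forall>x\<in>set xs. f x \<le> 0"
  shows "sum_list (map f xs) \<le> sum f (set xs)"
  using assms
proof (induction xs)
  case (Cons x xs)
  then show ?case by (cases "x \<in> set xs") (auto simp: insert_absorb)
qed simp

lemma cartan_eq_0_if_repeated:
  assumes "i \<in> Iset n" "set xs \<subseteq> Iset n" "i \<notin> set xs" "2 \<le> count_list xs m"
    and "-1 \<le> sum_list (map (cartan t n i) xs)"
  shows "cartan t n i m = 0"
proof (rule ccontr)
  assume "cartan t n i m \<noteq> 0"
  moreover have "m \<in> set xs"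
    using assms(4) by (metis count_notin not_numeral_le_zero)
  moreover from this have "m \<noteq> i"
    using assms(3) by blast
  moreover from \<open>m \<in> set xs\<close> have "m \<in> Iset n"
    using assms(2) by blast
  ultimately have "cartan t n i m \<le> -1"
    using cartan_le_neg1_if_adjacent[of i n m t] cartan_eq_0_if_not_adjacent[of i m t n] assms(1)
    by blast
  then have "int (count_list xs m) * cartan t n i m \<le> int (count_list xs m) * (-1)"
    by (intro mult_left_mono) auto
  then have "int (count_list xs m) * cartan t n i m \<le> -2"
    using assms(4) by linarith
  moreover have "sum_list (map (cartan t n i) xs) \<le> int (count_list xs m) * cartan t n i m"
    using assms(3) by (intro sum_list_le_count_list_mult) (auto intro: cartan_nonpos)
  ultimately show False
    using assms(5) by linarith
qed

text \<open>For dominant \<open>\<Lambda>\<close>, the condition \<open>\<Lambda>(i) - \<Sum>a\<^sub>i\<^sub>m = 1\<close> at a last occurrence of \<open>i\<close>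
  forbids \<open>i\<close> to be linked to any letter that occurs twice after it, so the last occurrences
  can be moved to the end of the word.\<close>

lemma wact_remdups_dropped_remdups:
  assumes "ws \<in> words n" "minuscule_word t n L ws" "\<forall>j\<in>Iset n. 0 \<le> L j"
  shows "wact t n ws = wact t n (remdups_dropped ws @ remdups ws)"
  using assms
proof (induction ws)
  case (Cons i xs)
  have i: "i \<in> Iset n" and xs: "xs \<in> words n" using Cons.prems(1) by auto
  have mw: "minuscule_word t n L xs" "L i - sum_list (map (cartan t n i) xs) = 1"
    using Cons.prems(2) by (auto simp: minuscule_word_Cons)
  have IH: "wact t n xs = wact t n (remdups_dropped xs @ remdups xs)"
    using Cons.IH xs mw(1) Cons.prems(3) by blast
  show ?case
  proof (cases "i \<in> set xs")
    case True
    with IH show ?thesis by (simp add: wact_append)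
  next
    case False
    have "\<forall>m\<in>set (remdups_dropped xs). cartan t n i m = 0"
      using cartan_eq_0_if_repeated[OF i set_subset_Iset_if_words[OF xs] False
          count_list_ge_2_if_dropped] mw(2) Cons.prems(3) i by fastforce
    then have commute: "sref t n i \<circ> wact t n (remdups_dropped xs) = wact t n (remdups_dropped xs) \<circ> sref t n i"
      by (intro ext) (simp add: sref_wact_commute)
    have "wact t n (i # xs) = sref t n i \<circ> wact t n (remdups_dropped xs) \<circ> wact t n (remdups xs)"
      using IH by (simp add: wact_append comp_assoc)
    also have "\<dots> = wact t n (remdups_dropped xs) \<circ> sref t n i \<circ> wact t n (remdups xs)"
      by (simp only: commute)
    also have "\<dots> = wact t n (remdups_dropped (i # xs) @ remdups (i # xs))"
      using False by (simp add: wact_append comp_assoc)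
    finally show ?thesis .
  qed
qed simp

definition tail_bounded :: "ctype \<Rightarrow> nat \<Rightarrow> (nat \<Rightarrow> int) \<Rightarrow> nat list \<Rightarrow> bool" where
  "tail_bounded t n L xs = (\<forall>A j B. xs = A @ j # B \<longrightarrow> L j - (\<Sum>m\<in>set B. cartan t n j m) \<le> 1)"

lemma tail_bounded_remdups:
  assumes "minuscule_word t n L ws"
  shows "tail_bounded t n L (remdups ws)"
  using assms
proof (induction ws)
  case (Cons i xs)
  have mw: "minuscule_word t n L xs" "L i - sum_list (map (cartan t n i) xs) = 1"
    using Cons.prems by (auto simp: minuscule_word_Cons)
  show ?case
  proof (cases "i \<in> set xs")
    case True
    with Cons.IH mw(1) show ?thesis by simp
  next
    case False
    then have "sum_list (map (cartan t n i) xs) \<le> (\<Sum>m\<in>set xs. cartan t n i m)"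
      by (intro sum_list_le_sum_set) (auto intro: cartan_nonpos)
    then have "L i - (\<Sum>m\<in>set (remdups xs). cartan t n i m) \<le> 1"
      using mw(2) by simp
    with Cons.IH[OF mw(1)] False show ?thesis
      unfolding tail_bounded_def by (auto simp: Cons_eq_append_conv)
  qed
qed (simp add: tail_bounded_def)

fun precedes :: "'a list \<Rightarrow> 'a \<Rightarrow> 'a \<Rightarrow> bool" where
  "precedes [] a b = False"
| "precedes (x # xs) a b = ((x = a \<and> b \<in> set xs) \<or> precedes xs a b)"

lemma precedes_append:
  "precedes (A @ B) a b \<longleftrightarrow> precedes A a b \<or> (a \<in> set A \<and> b \<in> set B) \<or> precedes B a b"
  by (induction A) auto

lemma precedes_in_set: "precedes xs a b \<Longrightarrow> a \<in> set xs \<and> b \<in> set xs"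
  by (induction xs) auto

lemma precedes_split: "distinct (A @ j # B) \<Longrightarrow> precedes (A @ j # B) j m \<longleftrightarrow> m \<in> set B"
  by (auto simp: precedes_append dest: precedes_in_set)

lemma precedes_asym: "distinct xs \<Longrightarrow> precedes xs a b \<Longrightarrow> \<not> precedes xs b a"
  by (induction xs) (auto dest: precedes_in_set)

lemma precedes_remove: "a \<noteq> x \<Longrightarrow> b \<noteq> x \<Longrightarrow> precedes (A @ x # B) a b \<longleftrightarrow> precedes (A @ B) a b"
  by (auto simp: precedes_append)

lemma precedes_rev: "precedes (rev xs) a b \<longleftrightarrow> precedes xs b a"
  by (induction xs) (auto simp: precedes_append)

lemma precedes_upt:
  assumes "a \<le> i" "i < j" "j < b"
  shows "precedes [a..<b] i j"
proof -
  have "[a..<b] = [a..<i] @ [i..<b]"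
    using assms upt_add_eq_append[of a i "b - i"] by simp
  also have "[i..<b] = i # [Suc i..<b]"
    using assms by (simp add: upt_conv_Cons)
  finally show ?thesis
    using assms by (simp add: precedes_append)
qed

text \<open>The first letter of \<open>L\<close> is linked to no letter before it in \<open>V\<close>, so it can be moved to
  the front of \<open>V\<close>.\<close>

lemma wact_eq_if_linked_letters_same_order:
  assumes "distinct L" "distinct V" "set L = set V" "set L \<subseteq> Iset n"
    and "\<forall>a\<in>set L. \<forall>b\<in>set L. a \<noteq> b \<longrightarrow> cartan t n a b \<noteq> 0 \<longrightarrow> (precedes L a b \<longleftrightarrow> precedes V a b)"
  shows "wact t n L = wact t n V"
  using assms
proof (induction L arbitrary: V)
  case (Cons x L)
  obtain A B where V: "V = A @ x # B"
    using Cons.prems(3) by (metis list.set_intros(1) split_list)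
  have "cartan t n x a = 0" if a: "a \<in> set A" for a
  proof -
    have "a \<noteq> x" "a \<in> set (x # L)"
      using a V Cons.prems(2,3) by auto
    moreover have "precedes V a x" "\<not> precedes (x # L) a x"
      using a V Cons.prems(1) \<open>a \<noteq> x\<close> by (auto simp: precedes_append dest: precedes_in_set)
    ultimately show ?thesis
      using Cons.prems(5) cartan_eq_0_commute by fastforce
  qed
  then have "wact t n V = sref t n x \<circ> wact t n (A @ B)"
    using V sref_wact_commute[of A t n x] by (intro ext) (simp add: wact_append)
  moreover have "wact t n L = wact t n (A @ B)"
  proof (rule Cons.IH)
    show "set L = set (A @ B)"
      using Cons.prems(1-3) V by auto
    show "\<forall>a\<in>set L. \<forall>b\<in>set L. a \<noteq> b \<longrightarrow> cartan t n a b \<noteq> 0 \<longrightarrow>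
        precedes L a b = precedes (A @ B) a b"
      using Cons.prems(1,5) V precedes_remove[of _ x _ A B] by fastforce
  qed (use Cons.prems V in auto)
  ultimately show ?case by simp
qed simp

section \<open>Orientation of the Dynkin diagram towards the last letter\<close>

lemma sum_le_sum_subset_nonpos:
  fixes f :: "'a \<Rightarrow> int"
  assumes "finite B" "A \<subseteq> B" "\<forall>b\<in>B. f b \<le> 0"
  shows "sum f B \<le> sum f A"
proof -
  have "sum f B = sum f (B - A) + sum f A"
    using sum.subset_diff[OF assms(2,1)] by simp
  moreover have "sum f (B - A) \<le> 0"
    using assms(3) by (intro sum_nonpos) auto
  ultimately show ?thesis by simp
qed

lemma adjacent_irrefl: "\<not> adjacent t j j"
  unfolding adjacent_def by auto

text \<open>The neighbour \<open>m\<close> alone contributes \<open>-1\<close> to the sum over the tail after \<open>j\<close>, which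
  exhausts the bound.\<close>

lemma tail_bounded_neighbour_after:
  assumes L: "distinct L" "set L = Iset n" "tail_bounded t n Lam L"
    and m: "precedes L j m" "adjacent t j m" and nonneg: "0 \<le> Lam j"
  shows "Lam j = 0" "cartan t n j m = -1"
    "\<And>m'. m' \<in> Iset n \<Longrightarrow> adjacent t j m' \<Longrightarrow> m' \<noteq> m \<Longrightarrow> precedes L m' j"
proof -
  obtain A B where AB: "L = A @ j # B"
    using precedes_in_set[OF m(1)] by (meson split_list)
  then have mB: "m \<in> set B"
    using precedes_split[of A j B m] L(1) m(1) by simp
  have jB: "j \<notin> set B" "set B \<subseteq> Iset n" "j \<in> Iset n"
    using L(1,2) AB by auto
  have nonpos: "\<forall>m\<in>set B. cartan t n j m \<le> 0"
    using jB by (auto intro: cartan_nonpos)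
  have bound: "Lam j - (\<Sum>m\<in>set B. cartan t n j m) \<le> 1"
    using L(3) AB unfolding tail_bounded_def by blast
  have "m \<noteq> j"
    using m(2) adjacent_irrefl by metis
  then have cm: "cartan t n j m \<le> -1"
    using cartan_le_neg1_if_adjacent[of j n m t] jB mB m(2) by auto
  have "(\<Sum>m\<in>set B. cartan t n j m) \<le> cartan t n j m"
    using sum_le_sum_subset_nonpos[of "set B" "{m}"] mB nonpos by simp
  then show "Lam j = 0" "cartan t n j m = -1"
    using bound cm nonneg by linarith+
  show "precedes L m' j" if m': "m' \<in> Iset n" "adjacent t j m'" "m' \<noteq> m" for m'
  proof -
    have "m' \<noteq> j"
      using m'(2) adjacent_irrefl by metis
    have "m' \<notin> set B"
    proof
      assume "m' \<in> set B"
      then have "(\<Sum>m\<in>set B. cartan t n j m) \<le> (\<Sum>m\<in>{m, m'}. cartan t n j m)"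
        using sum_le_sum_subset_nonpos[of "set B" "{m, m'}"] mB nonpos by simp
      moreover have "cartan t n j m' \<le> -1"
        using cartan_le_neg1_if_adjacent jB m' \<open>m' \<noteq> j\<close> by blast
      ultimately show False
        using bound cm nonneg m'(3) by simp
    qed
    with m'(1) \<open>m' \<noteq> j\<close> L(2) AB have "m' \<in> set A"
      by auto
    with AB show ?thesis
      by (simp add: precedes_append)
  qed
qed

lemma precedes_last: "j \<in> set L \<Longrightarrow> j \<noteq> last L \<Longrightarrow> precedes L j (last L)"
  by (induction L) (auto split: if_splits)

text \<open>Here \<open>parent\<close> and \<open>depth\<close> describe the Dynkin diagram as a tree rooted at \<open>k\<close>. By induction
  on the depth, the parent \<open>p\<close> of \<open>j\<close> comes after all of its neighbours except its own parent,
  so in particular after \<open>j\<close>.\<close>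

lemma tail_bounded_orientation:
  fixes parent depth :: "nat \<Rightarrow> nat"
  assumes L: "distinct L" "set L = Iset n" "last L = k" "tail_bounded t n Lam L"
    and nonneg: "\<forall>j\<in>Iset n. 0 \<le> Lam j"
    and parent: "\<And>j. j \<in> Iset n \<Longrightarrow> j \<noteq> k \<Longrightarrow>
      parent j \<in> Iset n \<and> adjacent t j (parent j) \<and> depth (parent j) + 1 = depth j"
    and j: "j \<in> Iset n" "j \<noteq> k"
  shows "Lam j = 0 \<and> cartan t n j (parent j) = -1 \<and> precedes L j (parent j) \<and>
    (\<forall>m\<in>Iset n. adjacent t j m \<and> m \<noteq> parent j \<longrightarrow> precedes L m j)"
  using j
proof (induction "depth j" arbitrary: j rule: less_induct)
  case less
  have p: "parent j \<in> Iset n" "adjacent t j (parent j)" "depth (parent j) + 1 = depth j"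
    using parent less.prems by auto
  have "precedes L j (parent j)"
  proof (cases "parent j = k")
    case True
    then show ?thesis
      using precedes_last[of j L] less.prems L(2,3) by simp
  next
    case False
    have "depth (parent (parent j)) + 1 = depth (parent j)"
      using parent[OF p(1) False] by blast
    then have "parent (parent j) \<noteq> j"
      using p(3) by auto
    moreover have "\<forall>m\<in>Iset n. adjacent t (parent j) m \<and> m \<noteq> parent (parent j) \<longrightarrow>
        precedes L m (parent j)"
      using less.hyps[of "parent j"] p(1,3) False by simp
    moreover have "adjacent t (parent j) j"
      using p(2) adjacent_commute by metis
    ultimately show ?thesis
      using less.prems(1) by auto
  qed
  moreover have "0 \<le> Lam j"
    using nonneg less.prems(1) by blast
  ultimately show ?case
    using tail_bounded_neighbour_after[OF L(1,2,4) _ p(2)] by blast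
qed

definition dynkin_parent :: "ctype \<Rightarrow> nat \<Rightarrow> nat \<Rightarrow> nat" where
  "dynkin_parent t k j = (if t = TD then
      (if k = 1 then (if j = 2 then 3 else if j = 3 then 1 else j - 1)
       else if k = 2 then (if j = 1 then 3 else if j = 3 then 2 else j - 1)
       else (if j > k then j - 1 else if j \<le> 2 then 3 else j + 1))
    else (if j < k then j + 1 else j - 1))"

definition dynkin_depth :: "ctype \<Rightarrow> nat \<Rightarrow> nat \<Rightarrow> nat" where
  "dynkin_depth t k j = (if t = TD then
      (if k = 1 then (if j = 1 then 0 else if j = 2 then 2 else j - 2)
       else if k = 2 then (if j = 2 then 0 else if j = 1 then 2 else j - 2)
       else (if j > k then j - k else if j \<le> 2 then k - 2 else k - j))
    else (if j < k then k - j else j - k))"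

lemma adjacent_TD_iff:
  "adjacent TD i j \<longleftrightarrow> (3 \<le> i \<and> j = i + 1) \<or> (3 \<le> j \<and> i = j + 1) \<or>
     (i = 1 \<and> j = 3) \<or> (i = 3 \<and> j = 1) \<or> (i = 2 \<and> j = 3) \<or> (i = 3 \<and> j = 2)"
  unfolding adjacent_def by (auto simp: doubleton_eq_iff)

lemma adjacent_chain_iff: "t \<noteq> TD \<Longrightarrow> adjacent t i j \<longleftrightarrow> i = j + 1 \<or> j = i + 1"
  unfolding adjacent_def by auto

lemma dynkin_parent:
  assumes t: "valid_type t n" and k: "k \<in> Iset n" and j: "j \<in> Iset n" "j \<noteq> k"
  shows "dynkin_parent t k j \<in> Iset n \<and> adjacent t j (dynkin_parent t k j) \<and>
    dynkin_depth t k (dynkin_parent t k j) + 1 = dynkin_depth t k j"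
proof (cases "t = TD")
  case True
  have n: "4 \<le> n" using True t by (simp add: valid_type_def)
  have "k = 1 \<or> k = 2 \<or> 3 \<le> k" "1 \<le> j" "j \<le> n" "k \<le> n"
    using k j by (auto simp: in_Iset_iff)
  then show ?thesis
  proof (elim disjE)
    assume "k = 1"
    then have "j = 2 \<or> j = 3 \<or> 4 \<le> j" using j by (auto simp: in_Iset_iff)
    with \<open>k = 1\<close> n \<open>j \<le> n\<close> show ?thesis
      unfolding True dynkin_parent_def dynkin_depth_def adjacent_TD_iff in_Iset_iff by auto
  next
    assume "k = 2"
    then have "j = 1 \<or> j = 3 \<or> 4 \<le> j" using j by (auto simp: in_Iset_iff)
    with \<open>k = 2\<close> n \<open>j \<le> n\<close> show ?thesis
      unfolding True dynkin_parent_def dynkin_depth_def adjacent_TD_iff in_Iset_iff by auto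
  next
    assume "3 \<le> k"
    have "j > k \<or> j \<le> 2 \<or> (3 \<le> j \<and> j < k)" using j(2) by linarith
    with \<open>3 \<le> k\<close> n \<open>1 \<le> j\<close> \<open>j \<le> n\<close> \<open>k \<le> n\<close> show ?thesis
      unfolding True dynkin_parent_def dynkin_depth_def adjacent_TD_iff in_Iset_iff by auto
  qed
next
  case False
  have "j < k \<or> k < j" using j(2) by linarith
  then show ?thesis
    using False k j unfolding dynkin_parent_def dynkin_depth_def adjacent_chain_iff[OF False] in_Iset_iff
    by auto
qed

lemma adjacent_imp_dynkin_parent:
  assumes "k \<in> Iset n" "adjacent t a b"
  shows "(a \<noteq> k \<and> b = dynkin_parent t k a) \<or> (b \<noteq> k \<and> a = dynkin_parent t k b)"
proof (cases "t = TD")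
  case True
  then have "(3 \<le> a \<and> b = a + 1) \<or> (3 \<le> b \<and> a = b + 1) \<or>
      (a = 1 \<and> b = 3) \<or> (a = 3 \<and> b = 1) \<or> (a = 2 \<and> b = 3) \<or> (a = 3 \<and> b = 2)"
    using assms(2) adjacent_TD_iff by simp
  moreover have "k = 1 \<or> k = 2 \<or> 3 \<le> k"
    using assms(1) by (auto simp: in_Iset_iff)
  ultimately show ?thesis
    using True unfolding dynkin_parent_def by (elim disjE) auto
next
  case False
  then have "b = a + 1 \<or> a = b + 1"
    using assms(2) adjacent_chain_iff by auto
  then show ?thesis
    using False unfolding dynkin_parent_def by auto
qed

lemma Kset_subset_Iset: "valid_type t n \<Longrightarrow> Kset t n \<subseteq> Iset n"
  by (cases t) (auto simp: Kset_def valid_type_def in_Iset_iff)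

text \<open>\<open>k \<in> K\<close> iff no double bond is traversed from its short to its long end on the way to \<open>k\<close>.\<close>

lemma cartan_dynkin_parent_if_Kset:
  assumes t: "valid_type t n" and k: "k \<in> Kset t n" and j: "j \<in> Iset n" "j \<noteq> k"
  shows "cartan t n j (dynkin_parent t k j) = -1"
proof -
  have kI: "k \<in> Iset n" using k Kset_subset_Iset[OF t] by blast
  have p: "dynkin_parent t k j \<in> Iset n" "adjacent t j (dynkin_parent t k j)"
    using dynkin_parent[OF t kI j] by auto
  then have "dynkin_parent t k j \<noteq> j"
    using adjacent_irrefl by metis
  moreover have "\<not> (t = TB \<and> j = 1)"
    using k j by (auto simp: Kset_def)
  moreover have "\<not> (t = TC \<and> j = 2 \<and> dynkin_parent t k j = 1)"
    using k j kI unfolding dynkin_parent_def by (auto simp: Kset_def in_Iset_iff)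
  ultimately show ?thesis
    using cartan_adjacent[OF j(1) p(1) _ p(2)] by auto
qed

lemma cartan_dynkin_parent_if_not_Kset:
  assumes t: "valid_type t n" and k: "k \<in> Iset n" "k \<notin> Kset t n"
  obtains j where "j \<in> Iset n" "j \<noteq> k" "cartan t n j (dynkin_parent t k j) \<noteq> -1"
proof (cases t)
  case TB
  then have "2 \<le> n" "k \<noteq> 1" using t k by (auto simp: valid_type_def Kset_def)
  moreover have "dynkin_parent t k 1 = 2"
    using k \<open>k \<noteq> 1\<close> TB unfolding dynkin_parent_def by (auto simp: in_Iset_iff)
  ultimately show ?thesis
    using that[of 1] TB by (simp add: cartan_def adjacent_def in_Iset_iff)
next
  case TC
  then have "2 \<le> n" "k = 1" using t k by (auto simp: valid_type_def Kset_def)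
  moreover have "dynkin_parent t k 2 = 1"
    using \<open>k = 1\<close> TC unfolding dynkin_parent_def by simp
  ultimately show ?thesis
    using that[of 2] TC by (simp add: cartan_def adjacent_def in_Iset_iff)
qed (use k in \<open>simp_all add: Kset_def\<close>)

definition chain_word :: "nat \<Rightarrow> nat \<Rightarrow> nat list" where
  "chain_word n k = rev [k+1..<n+1] @ [1..<k+1]"

lemma chain_word_props:
  "1 \<le> k \<Longrightarrow> k \<le> n \<Longrightarrow>
    distinct (chain_word n k) \<and> set (chain_word n k) = Iset n \<and> last (chain_word n k) = k"
  unfolding chain_word_def Iset_def by auto

lemma precedes_chain_word:
  assumes "1 \<le> a" "(a < b \<and> b \<le> k) \<or> (k < b \<and> b < a \<and> a \<le> n) \<or> (k < a \<and> a \<le> n \<and> 1 \<le> b \<and> b \<le> k)"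
  shows "precedes (chain_word n k) a b"
  using assms precedes_upt[of 1 a b "k+1"] precedes_upt[of "k+1" b a "n+1"]
  unfolding chain_word_def by (auto simp: precedes_append precedes_rev)

lemma vword_props_TD_fork:
  assumes n: "4 \<le> n" and k: "k = 1 \<or> k = 2"
  shows "distinct (vword TD n k) \<and> set (vword TD n k) = Iset n \<and> last (vword TD n k) = k \<and>
    (\<forall>j\<in>Iset n. j \<noteq> k \<longrightarrow> precedes (vword TD n k) j (dynkin_parent TD k j))"
proof -
  have vw: "vword TD n k = [3 - k] @ rev [3..<n+1] @ [k]"
    using k by (auto simp: vword_def)
  have "precedes (vword TD n k) j (dynkin_parent TD k j)" if "j \<in> Iset n" "j \<noteq> k" for j
  proof -
    have "j = 3 - k \<or> j = 3 \<or> 4 \<le> j"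
      using that k by (auto simp: in_Iset_iff)
    with that n k show ?thesis
      unfolding vw dynkin_parent_def by (auto simp: precedes_append precedes_rev precedes_upt in_Iset_iff)
  qed
  then show ?thesis
    using vw n k by (auto simp: Iset_def)
qed

lemma vword_props:
  assumes t: "valid_type t n" and k: "k \<in> Kset t n"
  shows "distinct (vword t n k) \<and> set (vword t n k) = Iset n \<and> last (vword t n k) = k \<and>
    (\<forall>j\<in>Iset n. j \<noteq> k \<longrightarrow> precedes (vword t n k) j (dynkin_parent t k j))"
proof -
  have k_bounds: "1 \<le> k" "k \<le> n"
    using k Kset_subset_Iset[OF t] by (auto simp: in_Iset_iff)
  have chain: ?thesis if "vword t n k = chain_word n k"
    and parent: "\<And>j. j \<in> Iset n \<Longrightarrow> j \<noteq> k \<Longrightarrow> (j < dynkin_parent t k j \<and> dynkin_parent t k j \<le> k) \<or>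
      (k < dynkin_parent t k j \<and> dynkin_parent t k j < j) \<or> (k < j \<and> 1 \<le> dynkin_parent t k j \<and> dynkin_parent t k j \<le> k)"
    using that chain_word_props[OF k_bounds] precedes_chain_word parent
    by (simp add: in_Iset_iff)
  show ?thesis
  proof (cases t)
    case TB
    then have "k = 1" using k by (simp add: Kset_def)
    have "rev [1..<n+1] = rev [2..<n+1] @ [1]"
      using k_bounds by (simp add: upt_conv_Cons numeral_2_eq_2)
    then have "vword t n k = chain_word n k"
      using TB \<open>k = 1\<close> by (simp add: vword_def chain_word_def numeral_2_eq_2)
    then show ?thesis
      by (rule chain) (use TB \<open>k = 1\<close> in \<open>auto simp: dynkin_parent_def in_Iset_iff\<close>)
  next
    case TD
    show ?thesis
    proof (cases "k \<le> 2")
      case True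
      with k_bounds have "k = 1 \<or> k = 2"
        by auto
      moreover have "4 \<le> n"
        using TD t by (simp add: valid_type_def)
      ultimately show ?thesis
        using TD vword_props_TD_fork by simp
    next
      case False
      then show ?thesis
        by (intro chain) (use TD k_bounds in \<open>auto simp: vword_def chain_word_def dynkin_parent_def in_Iset_iff\<close>)
    qed
  qed (rule chain; use k_bounds in \<open>auto simp: vword_def chain_word_def dynkin_parent_def in_Iset_iff\<close>)+
qed

lemma minuscule_word_fundw_if_tail_sums:
  assumes "distinct L" "L \<noteq> []" "last L = k"
    and "\<And>A j B. L = A @ j # B \<Longrightarrow> j \<noteq> k \<Longrightarrow> (\<Sum>m\<in>set B. cartan t n j m) = -1"
  shows "minuscule_word t n (fundw k) L"
  using assms
proof (induction L)
  case (Cons x xs)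
  have "sum_list (map (cartan t n x) xs) = (\<Sum>m\<in>set xs. cartan t n x m)"
    using Cons.prems(1) by (simp add: sum_list_distinct_conv_sum_set)
  show ?case
  proof (cases "xs = []")
    case True
    with Cons.prems show ?thesis by (simp add: minuscule_word_Cons fundw_def)
  next
    case False
    then have "last xs = k" "x \<noteq> k"
      using Cons.prems(1,3) last_in_set[of xs] by auto
    moreover have "minuscule_word t n (fundw k) xs"
    proof (rule Cons.IH)
      show "(\<Sum>m\<in>set B. cartan t n j m) = -1" if "xs = A @ j # B" "j \<noteq> k" for A j B
        using Cons.prems(4)[of "x # A" j B] that by simp
    qed (use Cons.prems(1) False \<open>last xs = k\<close> in auto)
    moreover have "(\<Sum>m\<in>set xs. cartan t n x m) = -1"
      using Cons.prems(4)[of "[]" x xs] \<open>x \<noteq> k\<close> by simp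
    ultimately show ?thesis
      using \<open>sum_list (map (cartan t n x) xs) = _\<close> by (simp add: minuscule_word_Cons fundw_def)
  qed
qed simp

lemma sum_cartan_single_neighbour:
  assumes "j \<notin> set B" "p \<in> set B" "\<And>m. m \<in> set B \<Longrightarrow> adjacent t j m \<Longrightarrow> m = p"
    and "cartan t n j p = -1"
  shows "(\<Sum>m\<in>set B. cartan t n j m) = -1"
proof -
  have "(\<Sum>m\<in>set B - {p}. cartan t n j m) = 0"
    using assms(1,3) by (intro sum.neutral ballI cartan_eq_0_if_not_adjacent) auto
  then show ?thesis
    using assms(2,4) by (simp add: sum.remove)
qed

lemma vword_minuscule:
  assumes t: "valid_type t n" and k: "k \<in> Kset t n"
  shows "minuscule_word t n (fundw k) (vword t n k)"
proof (rule minuscule_word_fundw_if_tail_sums)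
  note V = vword_props[OF t k]
  have kI: "k \<in> Iset n" using k Kset_subset_Iset[OF t] by blast
  show "distinct (vword t n k)" "last (vword t n k) = k"
    using V by auto
  show "vword t n k \<noteq> []"
    using V kI by auto
  fix A j B assume AB: "vword t n k = A @ j # B" and "j \<noteq> k"
  have "j \<in> Iset n" using AB V by auto
  have "dynkin_parent t k j \<in> set B"
    using V AB \<open>j \<in> Iset n\<close> \<open>j \<noteq> k\<close> precedes_split[of A j B] by metis
  moreover have "m = dynkin_parent t k j" if "m \<in> set B" "adjacent t j m" for m
  proof (rule ccontr)
    assume "m \<noteq> dynkin_parent t k j"
    then have "j = dynkin_parent t k m" "m \<noteq> k" "m \<in> Iset n"
      using adjacent_imp_dynkin_parent[OF kI that(2)] that(1) AB V by auto
    then have "precedes (vword t n k) m j"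
      using V by auto
    then show False
      using precedes_asym[of "vword t n k" j m] precedes_split[of A j B m] that(1) AB V by auto
  qed
  ultimately show "(\<Sum>m\<in>set B. cartan t n j m) = -1"
    using sum_cartan_single_neighbour cartan_dynkin_parent_if_Kset[OF t k \<open>j \<in> Iset n\<close> \<open>j \<noteq> k\<close>]
      AB V by (metis distinct_append distinct.simps(2))
qed

lemma vword_in_words: "valid_type t n \<Longrightarrow> k \<in> Kset t n \<Longrightarrow> vword t n k \<in> words n"
  using vword_props by (simp add: words_def)

lemma length_vword: "valid_type t n \<Longrightarrow> k \<in> Kset t n \<Longrightarrow> length (vword t n k) = n"
  using vword_props distinct_card by (metis Iset_def card_atLeastAtMost diff_Suc_1)

section \<open>Strong minuscule elements\<close>

lemma minuscule_weight_eq_fundw_if_factorization: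
  assumes t: "valid_type t n" and ws: "reduced t n ws" "wact t n ws = w"
    and k: "k \<in> Kset t n" and u: "u \<in> weyl t n" "w = u \<circ> wact t n (vword t n k)"
      "wlen t n w = wlen t n u + n"
    and L: "L \<in> weights n" "minuscule_word t n L ws"
  shows "L = fundw k"
proof -
  obtain us where us: "us \<in> words n" "wact t n us = u" "length us = wlen t n u"
    using wlen_attained[OF u(1)] by blast
  have "reduced t n (us @ vword t n k)" "wact t n (us @ vword t n k) = w"
    using us u vword_in_words[OF t k] length_vword[OF t k] unfolding reduced_def
    by (simp_all add: wact_append)
  then have "minuscule_word t n L (us @ vword t n k)"
    using minuscule_word_reduced_indep[OF ws(1)] ws(2) L(2) by simp
  then have "minuscule_word t n L (vword t n k)"
    by (rule minuscule_word_appendD)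
  then have "L j = fundw k j" if "j \<in> Iset n" for j
    using minuscule_word_determines[OF _ vword_minuscule[OF t k]] vword_props[OF t k] that by blast
  then show ?thesis
    using weights_eqI[OF L(1) fundw_in_weights] k Kset_subset_Iset[OF t] by blast
qed

lemma strong_minuscule_if_factorization:
  assumes t: "valid_type t n" and ws: "reduced t n ws" "wact t n ws = w"
    and "minuscule t n w" and k: "k \<in> Kset t n"
    and u: "u \<in> weyl t n" "w = u \<circ> wact t n (vword t n k)" "wlen t n w = wlen t n u + n"
  shows "strong_minuscule t n w" "Lambda_w t n w = fundw k"
proof -
  have unique: "L = fundw k" if L: "L \<in> weights n" "minuscule_for t n L w" for L
  proof -
    obtain ws' where "reduced t n ws'" "wact t n ws' = w" "minuscule_word t n L ws'"
      using L(2) unfolding minuscule_for_iff by blast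
    then have "minuscule_word t n L ws"
      using minuscule_word_reduced_indep[OF _ ws(1)] ws(2) by simp
    then show ?thesis
      using minuscule_weight_eq_fundw_if_factorization[OF t ws k u L(1)] by blast
  qed
  have "fundw k \<in> dominant n" "minuscule_for t n (fundw k) w"
    using assms(4) unique fundw_in_dominant k Kset_subset_Iset[OF t]
    unfolding minuscule_def by blast+
  moreover have "L = fundw k" if "L \<in> dominant n" "minuscule_for t n L w" for L
    using unique that by (simp add: dominant_def)
  ultimately show "strong_minuscule t n w" "Lambda_w t n w = fundw k"
    unfolding strong_minuscule_def Lambda_w_def by blast+
qed

lemma set_eq_Iset_if_unique_dominant:
  assumes ws: "ws \<in> words n" and L: "L \<in> dominant n" "minuscule_word t n L ws"
    and unique: "\<And>L'. L' \<in> dominant n \<Longrightarrow> minuscule_word t n L' ws \<Longrightarrow> L' = L"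
  shows "set ws = Iset n"
proof (rule ccontr)
  assume "set ws \<noteq> Iset n"
  then obtain j where j: "j \<in> Iset n" "j \<notin> set ws"
    using ws unfolding words_def by blast
  define L' where "L' = L(j := L j + 1)"
  have "L' \<in> dominant n"
    using L(1) j unfolding L'_def dominant_def weights_def by auto
  moreover have "minuscule_word t n L' ws"
    using L(2) j by (intro minuscule_word_cong[of ws L L']) (auto simp: L'_def)
  ultimately have "L' = L"
    by (rule unique)
  then show False
    unfolding L'_def by (metis fun_upd_same add_cancel_left_right one_neq_zero)
qed

lemma remdups_oriented:
  assumes t: "valid_type t n" and L: "L \<in> dominant n" "minuscule_word t n L ws"
    and ws: "set ws = Iset n" "ws \<noteq> []" and j: "j \<in> Iset n" "j \<noteq> last ws"
  shows "L j = 0 \<and> cartan t n j (dynkin_parent t (last ws) j) = -1 \<and>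
    precedes (remdups ws) j (dynkin_parent t (last ws) j)"
proof -
  have k: "last ws \<in> Iset n"
    using ws by (metis last_in_set)
  show ?thesis
    using tail_bounded_orientation[OF distinct_remdups _ last_remdups[OF ws(2)] tail_bounded_remdups[OF L(2)]
        _ dynkin_parent[OF t k] j] L(1) ws(1)
    by (simp add: dominant_def)
qed

lemma wact_eq_vword_if_oriented:
  assumes t: "valid_type t n" and k: "k \<in> Kset t n" and L: "distinct L" "set L = Iset n"
    and oriented: "\<And>j. j \<in> Iset n \<Longrightarrow> j \<noteq> k \<Longrightarrow> precedes L j (dynkin_parent t k j)"
  shows "wact t n L = wact t n (vword t n k)"
proof (rule wact_eq_if_linked_letters_same_order)
  have V: "distinct (vword t n k)" "set (vword t n k) = Iset n"
    "\<And>j. j \<in> Iset n \<Longrightarrow> j \<noteq> k \<Longrightarrow> precedes (vword t n k) j (dynkin_parent t k j)"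
    using vword_props[OF t k] by auto
  have kI: "k \<in> Iset n" using k Kset_subset_Iset[OF t] by blast
  show "distinct L" "distinct (vword t n k)" "set L = set (vword t n k)" "set L \<subseteq> Iset n"
    using L V(1,2) by simp_all
  show "\<forall>a\<in>set L. \<forall>b\<in>set L. a \<noteq> b \<longrightarrow> cartan t n a b \<noteq> 0 \<longrightarrow>
      precedes L a b = precedes (vword t n k) a b"
  proof (intro ballI impI)
    fix a b assume ab: "a \<in> set L" "b \<in> set L" "a \<noteq> b" "cartan t n a b \<noteq> 0"
    then have "adjacent t a b"
      using cartan_eq_0_if_not_adjacent[of a b t n] by blast
    from adjacent_imp_dynkin_parent[OF kI this]
    show "precedes L a b = precedes (vword t n k) a b"
    proof (elim disjE conjE)
      assume "a \<noteq> k" "b = dynkin_parent t k a"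
      with ab(1) L(2) show ?thesis
        using oriented[of a] V(3)[of a] by simp
    next
      assume "b \<noteq> k" "a = dynkin_parent t k b"
      with ab(2) L(2) have "precedes L b a" "precedes (vword t n k) b a"
        using oriented[of b] V(3)[of b] by simp_all
      then show ?thesis
        using precedes_asym[OF L(1)] precedes_asym[OF V(1)] by blast
    qed
  qed
qed

lemma wlen_additive_remdups_dropped_vword:
  assumes t: "valid_type t n" "k \<in> Kset t n" and ws: "reduced t n ws" "set ws = Iset n"
    and w: "wact t n ws = wact t n (remdups_dropped ws) \<circ> wact t n (vword t n k)"
  shows "\<exists>u \<in> weyl t n. wact t n ws = u \<circ> wact t n (vword t n k) \<and>
    wlen t n (wact t n ws) = wlen t n u + n"
proof -
  let ?u = "wact t n (remdups_dropped ws)"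
  have rw: "remdups_dropped ws \<in> words n"
    using ws(1) set_remdups_dropped[of ws] unfolding reduced_def words_def by blast
  have "length (remdups ws) = n"
    using ws(2) by (simp add: length_remdups_card_conv Iset_def)
  then have "wlen t n (wact t n ws) = length (remdups_dropped ws) + n"
    using ws(1) length_remdups_dropped[of ws] unfolding reduced_def by simp
  moreover have "wlen t n (wact t n ws) \<le> wlen t n ?u + n"
    using wlen_append_le_left[OF rw vword_in_words[OF t], of t] w length_vword[OF t]
    by (simp add: wact_append)
  ultimately have "wlen t n (wact t n ws) = wlen t n ?u + n"
    using wlen_le_length[OF rw, of t] by linarith
  with w wact_in_weyl[OF rw] show ?thesis
    by blast
qed

lemma factorization_if_strong_minuscule:
  assumes t: "valid_type t n" and ws: "reduced t n ws" "wact t n ws = w" "ws \<noteq> []"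
    and sm: "strong_minuscule t n w"
  shows "last ws \<in> Kset t n"
    "\<exists>u \<in> weyl t n. w = u \<circ> wact t n (vword t n (last ws)) \<and> wlen t n w = wlen t n u + n"
    "Lambda_w t n w = fundw (last ws)"
proof -
  let ?k = "last ws"
  have wsw: "ws \<in> words n" using ws(1) by (simp add: reduced_def)
  obtain L where L: "L \<in> dominant n" "minuscule_for t n L w"
    and unique: "\<And>L'. L' \<in> dominant n \<Longrightarrow> minuscule_for t n L' w \<Longrightarrow> L' = L"
    using sm unfolding strong_minuscule_def by blast
  obtain ws' where "reduced t n ws'" "wact t n ws' = w" "minuscule_word t n L ws'"
    using L(2) unfolding minuscule_for_iff by blast
  then have mw: "minuscule_word t n L ws"
    using minuscule_word_reduced_indep[OF _ ws(1)] ws(2) by simp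
  have full: "set ws = Iset n"
  proof (rule set_eq_Iset_if_unique_dominant[OF wsw L(1) mw])
    fix L' assume L': "L' \<in> dominant n" "minuscule_word t n L' ws"
    then have "minuscule_for t n L' w"
      unfolding minuscule_for_iff using ws(1,2) by blast
    with L'(1) show "L' = L"
      by (rule unique)
  qed
  have kI: "?k \<in> Iset n" using full ws(3) by (metis last_in_set)
  have oriented: "L j = 0" "cartan t n j (dynkin_parent t ?k j) = -1"
      "precedes (remdups ws) j (dynkin_parent t ?k j)" if "j \<in> Iset n" "j \<noteq> ?k" for j
    using remdups_oriented[OF t L(1) mw full ws(3) that] by auto
  show kK: "?k \<in> Kset t n"
  proof (rule ccontr)
    assume "?k \<notin> Kset t n"
    then obtain j where "j \<in> Iset n" "j \<noteq> ?k" "cartan t n j (dynkin_parent t ?k j) \<noteq> -1"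
      using cartan_dynkin_parent_if_not_Kset[OF t kI] by blast
    with oriented(2) show False by blast
  qed
  have "L ?k = 1"
    using mw minuscule_word_appendD[of t n L "butlast ws" "[?k]"] append_butlast_last_id[OF ws(3)]
    by (simp add: minuscule_word_Cons)
  then have "L = fundw ?k"
    using oriented(1) L(1) fundw_in_weights[OF kI]
    by (intro weights_eqI) (auto simp: dominant_def fundw_def)
  moreover have "Lambda_w t n w = L"
    unfolding Lambda_w_def by (rule the_equality) (use L unique in blast)+
  ultimately show "Lambda_w t n w = fundw ?k"
    by simp
  have "wact t n (remdups ws) = wact t n (vword t n ?k)"
    using wact_eq_vword_if_oriented[OF t kK distinct_remdups, of ws] oriented(3) full by simp
  then have "wact t n ws = wact t n (remdups_dropped ws) \<circ> wact t n (vword t n ?k)"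
    using wact_remdups_dropped_remdups[OF wsw mw] L(1) by (simp add: dominant_def wact_append)
  then show "\<exists>u \<in> weyl t n. w = u \<circ> wact t n (vword t n ?k) \<and> wlen t n w = wlen t n u + n"
    using wlen_additive_remdups_dropped_vword[OF t kK ws(1) full] ws(2) by simp
qed

theorem lemma6p3:
  fixes t :: ctype and n :: nat and w :: "(nat \<Rightarrow> int) \<Rightarrow> (nat \<Rightarrow> int)" and ws :: "nat list"
  assumes "valid_type t n"
    and "w \<in> weyl t n"
    and "minuscule t n w"
    and "reduced_expr t n ws w"
    and "ws \<noteq> []"
  shows "(strong_minuscule t n w \<longleftrightarrow>
           last ws \<in> Kset t n \<and>
           (\<exists>u \<in> weyl t n. w = u \<circ> wact t n (vword t n (last ws)) \<and>
                             wlen t n w = wlen t n u + n))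
       \<and> (strong_minuscule t n w \<longrightarrow> Lambda_w t n w = fundw (last ws))"
proof -
  have ws: "reduced t n ws" "wact t n ws = w"
    using assms(4) by (auto simp: reduced_expr_iff)
  show ?thesis
  proof (intro conjI iffI impI)
    assume "last ws \<in> Kset t n \<and>
      (\<exists>u \<in> weyl t n. w = u \<circ> wact t n (vword t n (last ws)) \<and> wlen t n w = wlen t n u + n)"
    then show "strong_minuscule t n w"
      using strong_minuscule_if_factorization(1)[OF assms(1) ws assms(3)] by blast
  qed (use factorization_if_strong_minuscule[OF assms(1) ws assms(5)] in auto)
qed

end
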